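(* Let $p,q\ge2$ be coprime, $\widetilde\Gamma=\langle\alpha,\beta\mid\alpha^p=\beta^q\rangle$ with $c=\alpha^p$, and let $r\ge1$ be an integer coprime to both $p$ and $q$. Let $G_r$ be the subgroup generated by $\alpha_r=\alpha^r$ and $\beta_r=\beta^r$. Then $\alpha\mapsto\alpha_r$, $\beta\mapsto\beta_r$ defines an isomorphism $\widetilde\Gamma\to G_r$, so $G_r\cong\langle\alpha_r,\beta_r\mid\alpha_r^p=\beta_r^q\rangle$, and: (i) $Z(G_r)=\langle c^r\rangle\subseteq Z(\widetilde\Gamma)$; (ii) $G_r'=\widetilde\Gamma'$; (iii) $G_r/G_r'$ is generated by the image of $x_r=\alpha_r^{q_1}\beta_r^{p_1}$ (where $pp_1+qq_1=1$), and the normal closure of $x_r$ in $\widetilde\Gamma$ and in $G_r$ both equal $G_r$; (iv) $G_r$ is normal in $\widetilde\Gamma$ and $\widetilde\Gamma/G_r\cong H/H_r\cong Z(\widetilde\Gamma)/Z(G_r)\cong\mathbb Z_r$, where $H=\widetilde\Gamma/\widetilde\Gamma'$, $H_r=G_r/G_r'$; (v) the projection $\widetilde\Gamma\to\widetilde\Gamma/Z(\widetilde\Gamma)\cong\Gamma_{p,q}$ maps $G_r$ onto $\Gamma_{p,q}$.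
   Context: $Z(\cdot)$ denotes the center and $(\cdot)'$ the commutator subgroup. The center of $\widetilde\Gamma$ is $\langle c\rangle$, and $\widetilde\Gamma/\langle c\rangle\cong\Gamma_{p,q}=\langle\alpha_0,\beta_0\mid\alpha_0^p=\beta_0^q=1\rangle$ via $\alpha\mapsto\alpha_0$, $\beta\mapsto\beta_0$. *)

theory Defs
  imports "HOL-Algebra.Algebra"
begin

datatype gen = Alpha | Beta

type_synonym letter = "gen \<times> bool"  \<comment> \<open>(generator, True = inverse letter)\<close>

definition letter_inv :: "letter \<Rightarrow> letter" where
  "letter_inv x = (fst x, \<not> snd x)"

inductive word_eq :: "nat \<Rightarrow> nat \<Rightarrow> letter list \<Rightarrow> letter list \<Rightarrow> bool" for p q where
  refl: "word_eq p q w w"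
| sym: "word_eq p q u v \<Longrightarrow> word_eq p q v u"
| trans: "word_eq p q u v \<Longrightarrow> word_eq p q v w \<Longrightarrow> word_eq p q u w"
| cancel: "word_eq p q (u @ [x, letter_inv x] @ v) (u @ v)"
| rel: "word_eq p q (u @ replicate p (Alpha, False) @ v) (u @ replicate q (Beta, False) @ v)"

definition word_class :: "nat \<Rightarrow> nat \<Rightarrow> letter list \<Rightarrow> letter list set" where
  "word_class p q w = {v. word_eq p q w v}"

definition Gt :: "nat \<Rightarrow> nat \<Rightarrow> letter list set monoid" where
  "Gt p q = \<lparr> carrier = range (word_class p q),
              monoid.mult = (\<lambda>A B. {w. \<exists>a\<in>A. \<exists>b\<in>B. word_eq p q (a @ b) w}),
              one = word_class p q [] \<rparr>"

definition galpha :: "nat \<Rightarrow> nat \<Rightarrow> letter list set" where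
  "galpha p q = word_class p q [(Alpha, False)]"

definition gbeta :: "nat \<Rightarrow> nat \<Rightarrow> letter list set" where
  "gbeta p q = word_class p q [(Beta, False)]"

definition center :: "('a, 'b) monoid_scheme \<Rightarrow> 'a set" where
  "center G = {z \<in> carrier G. \<forall>g \<in> carrier G. z \<otimes>\<^bsub>G\<^esub> g = g \<otimes>\<^bsub>G\<^esub> z}"

definition normal_closure :: "('a, 'b) monoid_scheme \<Rightarrow> 'a set \<Rightarrow> 'a set" where
  "normal_closure G S = generate G (\<Union>g \<in> carrier G. (\<lambda>s. g \<otimes>\<^bsub>G\<^esub> s \<otimes>\<^bsub>G\<^esub> inv\<^bsub>G\<^esub> g) ` S)"

end

theory Submission
  imports Defs
begin

text \<open>
  The whole development rests on two homomorphisms out of \<open>T\<close>, both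
  obtained from the universal property of the presentation:
  the degree map \<open>\<lambda> : T \<rightarrow> \<int>\<close> with \<open>\<lambda> a = q\<close>, \<open>\<lambda> b = p\<close>, and the power endomorphisms
  \<open>\<phi>\<^sub>n\<close> with \<open>a \<mapsto> a^n\<close>, \<open>b \<mapsto> b^n\<close>.  If \<open>n\<close> is coprime to \<open>pq\<close> and \<open>ns = 1 + kpq\<close>, then
  \<open>\<phi>\<^sub>s \<circ> \<phi>\<^sub>n\<close> is the twist \<open>g \<mapsto> g c^{k \<lambda> g}\<close>, which is injective; so \<open>\<phi>\<^sub>r\<close> is an isomorphism
  of \<open>T\<close> onto \<open>G\<^sub>r = \<langle>a^r, b^r\<rangle>\<close>.  Using Bezout one writes every element of \<open>T\<close> as
  \<open>x c^m\<close> with \<open>x \<in> G\<^sub>r\<close>; this gives normality of \<open>G\<^sub>r\<close>, equality of the commutator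
  subgroups, and surjectivity onto \<open>T/Z(T)\<close>.  A normal form for words (reduced syllable
  sequences times a power of \<open>c\<close>) shows \<open>Z(T) = \<langle>c\<rangle>\<close>, hence \<open>Z(G\<^sub>r) = \<phi>\<^sub>r\<langle>c\<rangle> = \<langle>c^r\<rangle>\<close>.
  The kernel of \<open>\<lambda>\<close> lies in \<open>T'\<close>, so the abelianisations are controlled by \<open>\<lambda>\<close>, and the
  three quotients in (iv) are each identified with \<open>\<int>/r\<close> through \<open>\<lambda>\<close>.
\<close>

lemma word_eq_append_left: "word_eq p q u v \<Longrightarrow> word_eq p q (s @ u) (s @ v)"
proof (induction rule: word_eq.induct)
  case (cancel u x v) show ?case using word_eq.cancel[of p q "s@u" x v] by simp
next
  case (rel u v) show ?case using word_eq.rel[of p q "s@u" v] by simp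
qed (auto intro: word_eq.intros)

lemma word_eq_append_right: "word_eq p q u v \<Longrightarrow> word_eq p q (u @ t) (v @ t)"
proof (induction rule: word_eq.induct)
  case (cancel u x v) show ?case using word_eq.cancel[of p q u x "v@t"] by simp
next
  case (rel u v) show ?case using word_eq.rel[of p q u "v@t"] by simp
qed (auto intro: word_eq.intros)

lemma word_eq_append:
  "word_eq p q a a' \<Longrightarrow> word_eq p q b b' \<Longrightarrow> word_eq p q (a @ b) (a' @ b')"
  by (meson word_eq.trans word_eq_append_left word_eq_append_right)

lemma word_class_eq_iff: "word_class p q u = word_class p q v \<longleftrightarrow> word_eq p q u v"
  unfolding word_class_def by (auto intro: word_eq.intros)

lemma in_word_class: "w \<in> word_class p q u \<longleftrightarrow> word_eq p q u w"
  by (simp add: word_class_def)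

lemma Gt_mult: "word_class p q u \<otimes>\<^bsub>Gt p q\<^esub> word_class p q v = word_class p q (u @ v)"
  unfolding Gt_def word_class_def
  by auto (meson word_eq.sym word_eq.trans word_eq_append, meson word_eq.refl)

lemma Gt_one: "\<one>\<^bsub>Gt p q\<^esub> = word_class p q []"
  by (simp add: Gt_def)

lemma Gt_carrier: "carrier (Gt p q) = range (word_class p q)"
  by (simp add: Gt_def)

definition winv :: "letter list \<Rightarrow> letter list" where
  "winv w = rev (map letter_inv w)"

lemma winv_cancel: "word_eq p q (winv w @ w) []"
proof (induction w)
  case Nil then show ?case by (simp add: winv_def word_eq.refl)
next
  case (Cons x w)
  have "winv (x # w) @ x # w = winv w @ [letter_inv x, letter_inv (letter_inv x)] @ w"
    by (simp add: winv_def letter_inv_def)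
  moreover have "word_eq p q (winv w @ [letter_inv x, letter_inv (letter_inv x)] @ w) (winv w @ w)"
    by (rule word_eq.cancel)
  ultimately show ?case using Cons word_eq.trans by metis
qed

lemma group_Gt: "group (Gt p q)"
proof (rule groupI)
  fix x y assume "x \<in> carrier (Gt p q)" "y \<in> carrier (Gt p q)"
  then show "x \<otimes>\<^bsub>Gt p q\<^esub> y \<in> carrier (Gt p q)" by (auto simp: Gt_carrier Gt_mult)
next
  show "\<one>\<^bsub>Gt p q\<^esub> \<in> carrier (Gt p q)" by (simp add: Gt_carrier Gt_one)
next
  fix x y z assume "x \<in> carrier (Gt p q)" "y \<in> carrier (Gt p q)" "z \<in> carrier (Gt p q)"
  then show "x \<otimes>\<^bsub>Gt p q\<^esub> y \<otimes>\<^bsub>Gt p q\<^esub> z = x \<otimes>\<^bsub>Gt p q\<^esub> (y \<otimes>\<^bsub>Gt p q\<^esub> z)"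
    by (auto simp: Gt_carrier Gt_mult)
next
  fix x assume "x \<in> carrier (Gt p q)"
  then show "\<one>\<^bsub>Gt p q\<^esub> \<otimes>\<^bsub>Gt p q\<^esub> x = x" by (auto simp: Gt_carrier Gt_mult Gt_one)
next
  fix x assume "x \<in> carrier (Gt p q)"
  then obtain w where w: "x = word_class p q w" by (auto simp: Gt_carrier)
  show "\<exists>y\<in>carrier (Gt p q). y \<otimes>\<^bsub>Gt p q\<^esub> x = \<one>\<^bsub>Gt p q\<^esub>"
    by (rule bexI[of _ "word_class p q (winv w)"])
       (auto simp: w Gt_mult Gt_one Gt_carrier word_class_eq_iff winv_cancel)
qed

section \<open>Universal property of the presentation\<close>

fun word_eval :: "('k,'m) monoid_scheme \<Rightarrow> 'k \<Rightarrow> 'k \<Rightarrow> letter list \<Rightarrow> 'k" where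
  "word_eval K x y [] = \<one>\<^bsub>K\<^esub>"
| "word_eval K x y (l # w) = (if snd l then inv\<^bsub>K\<^esub> (if fst l = Alpha then x else y)
                        else (if fst l = Alpha then x else y)) \<otimes>\<^bsub>K\<^esub> word_eval K x y w"

context group begin

lemma word_eval_closed:
  "x \<in> carrier G \<Longrightarrow> y \<in> carrier G \<Longrightarrow> word_eval G x y w \<in> carrier G"
  by (induction w) auto

lemma word_eval_append:
  "x \<in> carrier G \<Longrightarrow> y \<in> carrier G \<Longrightarrow>
     word_eval G x y (u @ v) = word_eval G x y u \<otimes> word_eval G x y v"
  by (induction u) (auto simp: word_eval_closed m_assoc)

lemma word_eval_replicate:
  "x \<in> carrier G \<Longrightarrow> y \<in> carrier G \<Longrightarrow>
     word_eval G x y (replicate n (g, False)) = (if g = Alpha then x else y) [^] n"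
proof (induction n)
  case (Suc n)
  then show ?case by (cases "g = Alpha") (simp_all add: nat_pow_Suc2[symmetric])
qed simp

lemma word_eval_word_eq:
  assumes "x \<in> carrier G" "y \<in> carrier G" "x [^] p = y [^] q"
  shows "word_eq p q u v \<Longrightarrow> word_eval G x y u = word_eval G x y v"
proof (induction rule: word_eq.induct)
  case (cancel u l v)
  have inv_pair: "word_eval G x y [l, letter_inv l] = \<one>"
    using assms by (cases l; cases "fst l"; cases "snd l") (auto simp: letter_inv_def)
  have "word_eval G x y (u @ [l, letter_inv l] @ v)
      = word_eval G x y u \<otimes> (word_eval G x y [l, letter_inv l] \<otimes> word_eval G x y v)"
    using assms by (simp only: word_eval_append)
  then show ?case using assms inv_pair by (simp add: word_eval_append word_eval_closed)
next
  case (rel u v)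
  show ?case using assms by (simp add: word_eval_append word_eval_replicate)
qed auto

end

definition Gt_lift :: "('k,'m) monoid_scheme \<Rightarrow> 'k \<Rightarrow> 'k \<Rightarrow> letter list set \<Rightarrow> 'k" where
  "Gt_lift K x y A = word_eval K x y (SOME w. w \<in> A)"

lemma Gt_lift_class:
  assumes "group K" "x \<in> carrier K" "y \<in> carrier K" "x [^]\<^bsub>K\<^esub> p = y [^]\<^bsub>K\<^esub> q"
  shows "Gt_lift K x y (word_class p q w) = word_eval K x y w"
proof -
  have "w \<in> word_class p q w" by (simp add: in_word_class word_eq.refl)
  then have "(SOME w'. w' \<in> word_class p q w) \<in> word_class p q w" by (rule someI)
  then show ?thesis unfolding Gt_lift_def in_word_class
    using group.word_eval_word_eq[OF assms] by (metis word_eq.sym)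
qed

lemma Gt_lift_hom:
  assumes "group K" "x \<in> carrier K" "y \<in> carrier K" "x [^]\<^bsub>K\<^esub> p = y [^]\<^bsub>K\<^esub> q"
  shows "Gt_lift K x y \<in> hom (Gt p q) K"
proof (rule homI)
  fix A assume "A \<in> carrier (Gt p q)"
  then show "Gt_lift K x y A \<in> carrier K"
    using Gt_lift_class[OF assms] group.word_eval_closed[OF assms(1-3)] by (auto simp: Gt_carrier)
next
  fix A B assume "A \<in> carrier (Gt p q)" "B \<in> carrier (Gt p q)"
  then show "Gt_lift K x y (A \<otimes>\<^bsub>Gt p q\<^esub> B) = Gt_lift K x y A \<otimes>\<^bsub>K\<^esub> Gt_lift K x y B"
    using Gt_lift_class[OF assms] group.word_eval_append[OF assms(1-3)]
    by (auto simp: Gt_carrier Gt_mult)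
qed

lemma Gt_lift_gens:
  assumes "group K" "x \<in> carrier K" "y \<in> carrier K" "x [^]\<^bsub>K\<^esub> p = y [^]\<^bsub>K\<^esub> q"
  shows "Gt_lift K x y (galpha p q) = x" "Gt_lift K x y (gbeta p q) = y"
  using Gt_lift_class[OF assms] assms
  by (auto simp: galpha_def gbeta_def group.is_monoid monoid.r_one)

lemma (in group) commute_generate:
  assumes "z \<in> carrier G" "S \<subseteq> carrier G" "\<And>s. s \<in> S \<Longrightarrow> z \<otimes> s = s \<otimes> z"
  shows "g \<in> generate G S \<Longrightarrow> z \<otimes> g = g \<otimes> z"
proof (induction rule: generate.induct)
  case (inv h)
  have h: "h \<in> carrier G" using inv assms by auto
  have zh: "z \<otimes> h = h \<otimes> z" using inv assms by auto
  have "z \<otimes> inv h = inv h \<otimes> h \<otimes> z \<otimes> inv h" using h assms by (metis l_inv l_one)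
  also have "\<dots> = inv h \<otimes> (h \<otimes> z) \<otimes> inv h" using h assms by (metis m_assoc inv_closed)
  also have "\<dots> = inv h \<otimes> (z \<otimes> h) \<otimes> inv h" using zh by simp
  also have "\<dots> = inv h \<otimes> z" using h assms by (simp add: m_assoc)
  finally show ?case .
next
  case (eng h1 h2)
  have "h1 \<in> carrier G" "h2 \<in> carrier G" using eng generate_in_carrier assms by auto
  then show ?case using eng assms by (metis m_assoc)
qed (use assms in auto)

lemma (in group_hom) hom_eq_on_generate:
  assumes "h' \<in> hom G H" "S \<subseteq> carrier G" "\<And>s. s \<in> S \<Longrightarrow> h s = h' s"
  shows "g \<in> generate G S \<Longrightarrow> h g = h' g"
proof -
  interpret h': group_hom G H h' using assms(1) by (simp add: group_hom_def group_hom_axioms_def)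
  show "g \<in> generate G S \<Longrightarrow> h g = h' g"
  proof (induction rule: generate.induct)
    case (eng h1 h2)
    have "h1 \<in> carrier G" "h2 \<in> carrier G" using eng G.generate_in_carrier assms by auto
    then show ?case using eng by simp
  qed (use assms in auto)
qed

context group begin

lemma central_swap:
  assumes "z \<in> carrier G" "g \<in> carrier G" "R \<in> carrier G" "z \<otimes> g = g \<otimes> z"
  shows "z \<otimes> (g \<otimes> R) = g \<otimes> (z \<otimes> R)"
  using assms by (metis m_assoc)

lemma central_conj:
  assumes y: "y \<in> carrier G" and z: "z \<in> carrier G" and h: "h \<in> carrier G"
    and cz: "\<And>g. g \<in> carrier G \<Longrightarrow> z \<otimes> g = g \<otimes> z"
  shows "(y \<otimes> z) \<otimes> h \<otimes> inv (y \<otimes> z) = y \<otimes> h \<otimes> inv y"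
proof -
  have "(y \<otimes> z) \<otimes> h \<otimes> inv (y \<otimes> z) = y \<otimes> (z \<otimes> (h \<otimes> (inv z \<otimes> inv y)))"
    using y z h inv_mult_group[OF y z] by (simp only: m_assoc m_closed inv_closed)
  also have "z \<otimes> (h \<otimes> (inv z \<otimes> inv y)) = h \<otimes> (z \<otimes> (inv z \<otimes> inv y))"
    using y z h cz[OF h] by (intro central_swap) auto
  also have "z \<otimes> (inv z \<otimes> inv y) = inv y" using y z by (simp add: m_assoc[symmetric])
  finally show ?thesis using y h by (simp add: m_assoc)
qed

lemma central_commutator:
  assumes x: "x \<in> carrier G" and y: "y \<in> carrier G" and z1: "z1 \<in> carrier G" and z2: "z2 \<in> carrier G"
    and c1: "\<And>g. g \<in> carrier G \<Longrightarrow> z1 \<otimes> g = g \<otimes> z1"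
    and c2: "\<And>g. g \<in> carrier G \<Longrightarrow> z2 \<otimes> g = g \<otimes> z2"
  shows "(x \<otimes> z1) \<otimes> (y \<otimes> z2) \<otimes> inv (x \<otimes> z1) \<otimes> inv (y \<otimes> z2) = x \<otimes> y \<otimes> inv x \<otimes> inv y"
proof -
  have i1: "inv z1 \<otimes> g = g \<otimes> inv z1" if g: "g \<in> carrier G" for g
  proof -
    have "inv z1 \<otimes> g = inv z1 \<otimes> g \<otimes> (z1 \<otimes> inv z1)" using g z1 by simp
    also have "\<dots> = inv z1 \<otimes> (g \<otimes> z1) \<otimes> inv z1" using g z1 by (simp only: m_assoc inv_closed m_closed)
    also have "\<dots> = inv z1 \<otimes> (z1 \<otimes> g) \<otimes> inv z1" using c1[OF g] by simp
    also have "\<dots> = g \<otimes> inv z1" using g z1 by (simp add: m_assoc[symmetric])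
    finally show ?thesis .
  qed
  have "(x \<otimes> z1) \<otimes> (y \<otimes> z2) \<otimes> inv (x \<otimes> z1) \<otimes> inv (y \<otimes> z2)
     = x \<otimes> (z1 \<otimes> (y \<otimes> (z2 \<otimes> (inv z1 \<otimes> (inv x \<otimes> (inv z2 \<otimes> inv y))))))"
    using x y z1 z2 inv_mult_group[OF x z1] inv_mult_group[OF y z2]
    by (simp only: m_assoc m_closed inv_closed)
  also have "z2 \<otimes> (inv z1 \<otimes> (inv x \<otimes> (inv z2 \<otimes> inv y)))
           = inv z1 \<otimes> (z2 \<otimes> (inv x \<otimes> (inv z2 \<otimes> inv y)))"
    using x y z1 z2 i1[of z2] by (intro central_swap[symmetric]) auto
  also have "y \<otimes> (inv z1 \<otimes> (z2 \<otimes> (inv x \<otimes> (inv z2 \<otimes> inv y))))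
           = inv z1 \<otimes> (y \<otimes> (z2 \<otimes> (inv x \<otimes> (inv z2 \<otimes> inv y))))"
    using x y z1 z2 i1[of y] by (intro central_swap[symmetric]) auto
  also have "z1 \<otimes> (inv z1 \<otimes> (y \<otimes> (z2 \<otimes> (inv x \<otimes> (inv z2 \<otimes> inv y)))))
           = y \<otimes> (z2 \<otimes> (inv x \<otimes> (inv z2 \<otimes> inv y)))"
    using x y z1 z2 by (simp add: m_assoc[symmetric])
  also have "z2 \<otimes> (inv x \<otimes> (inv z2 \<otimes> inv y)) = inv x \<otimes> (z2 \<otimes> (inv z2 \<otimes> inv y))"
    using x y z1 z2 c2[of "inv x"] by (intro central_swap) auto
  also have "z2 \<otimes> (inv z2 \<otimes> inv y) = inv y"
    using x y z1 z2 by (simp add: m_assoc[symmetric])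
  finally show ?thesis using x y z1 z2 by (simp add: m_assoc)
qed

lemma pq_relation_trivial:
  fixes p q :: nat and p1 q1 :: int
  assumes A: "A \<in> carrier G" and B: "B \<in> carrier G" and rel: "A [^] p = B [^] q"
    and bez: "int p * p1 + int q * q1 = 1" and x: "A [^] q1 \<otimes> B [^] p1 = \<one>"
  shows "A = \<one> \<and> B = \<one>"
proof -
  have relI: "A [^] (int p) = B [^] (int q)" using rel by (simp add: int_pow_int)
  have i1: "inv (B [^] p1) = A [^] q1" using x A B by (intro inv_equality) auto
  have e1: "A [^] q1 = B [^] (- p1)" using i1 B by (simp add: int_pow_neg)
  have e2: "B [^] p1 = A [^] (- q1)" using i1 A B by (metis int_pow_closed int_pow_neg inv_inv)
  have "A = A [^] (q1 * int q + int p * p1)" using bez A by (simp add: algebra_simps)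
  also have "\<dots> = (A [^] q1) [^] (int q) \<otimes> (A [^] (int p)) [^] p1"
    using A by (simp add: int_pow_mult int_pow_pow)
  also have "\<dots> = B [^] (- p1 * int q) \<otimes> B [^] (int q * p1)"
    using B by (simp add: e1 relI int_pow_pow)
  also have "\<dots> = B [^] (- p1 * int q + int q * p1)"
    using B by (simp only: int_pow_mult)
  also have "\<dots> = \<one>" by simp
  finally have a1: "A = \<one>" .
  have "B = B [^] (int q * q1 + p1 * int p)" using bez B by (simp add: algebra_simps)
  also have "\<dots> = (B [^] (int q)) [^] q1 \<otimes> (B [^] p1) [^] (int p)"
    using B by (simp add: int_pow_mult int_pow_pow)
  also have "\<dots> = A [^] (int p * q1) \<otimes> A [^] (- q1 * int p)"
    using A by (simp add: e2 relI[symmetric] int_pow_pow)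
  also have "\<dots> = A [^] (int p * q1 + - q1 * int p)"
    using A by (simp only: int_pow_mult)
  also have "\<dots> = \<one>" by simp
  finally show ?thesis using a1 by simp
qed

lemma rcos_eq_self_imp_mem: "subgroup H G \<Longrightarrow> x \<in> carrier G \<Longrightarrow> H #> x = H \<Longrightarrow> x \<in> H"
  using rcos_self by metis

lemma pq_relation_in_normal:
  fixes p q :: nat and p1 q1 :: int
  assumes N: "N \<lhd> G" and A: "A \<in> carrier G" and B: "B \<in> carrier G" and rel: "A [^] p = B [^] q"
    and bez: "int p * p1 + int q * q1 = 1" and x: "A [^] q1 \<otimes> B [^] p1 \<in> N"
  shows "A \<in> N \<and> B \<in> N"
proof -
  interpret N: normal N G by (rule N)
  have Q: "group (G Mod N)" by (rule N.factorgroup_is_group)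
  interpret h: group_hom G "G Mod N" "\<lambda>a. N #> a"
    using Q N.r_coset_hom_Mod by (simp add: group_hom_def group_hom_axioms_def is_group)
  have "N #> (A [^] q1 \<otimes> B [^] p1) = N" using x N.rcos_const is_group by blast
  then have 1: "(N #> A) [^]\<^bsub>G Mod N\<^esub> q1 \<otimes>\<^bsub>G Mod N\<^esub> (N #> B) [^]\<^bsub>G Mod N\<^esub> p1 = \<one>\<^bsub>G Mod N\<^esub>"
    using A B by (simp add: h.hom_int_pow[symmetric])
  have 2: "(N #> A) [^]\<^bsub>G Mod N\<^esub> p = (N #> B) [^]\<^bsub>G Mod N\<^esub> q"
    using A B rel by (simp add: h.hom_nat_pow[symmetric])
  have "N #> A = N \<and> N #> B = N"
    using group.pq_relation_trivial[OF Q _ _ 2 bez 1] A B by simp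
  then show ?thesis using rcos_eq_self_imp_mem N.subgroup_axioms A B by blast
qed

lemma normal_closure_normal:
  assumes "S \<subseteq> carrier G"
  shows "normal_closure G S \<lhd> G"
  unfolding normal_closure_def
proof (rule normal_generateI)
  show "(\<Union>g\<in>carrier G. (\<lambda>s. g \<otimes> s \<otimes> inv g) ` S) \<subseteq> carrier G" using assms by auto
next
  fix h x assume h: "h \<in> (\<Union>g\<in>carrier G. (\<lambda>s. g \<otimes> s \<otimes> inv g) ` S)" and x: "x \<in> carrier G"
  then obtain g s where gs: "g \<in> carrier G" "s \<in> S" "h = g \<otimes> s \<otimes> inv g" by blast
  have "x \<otimes> h \<otimes> inv x = (x \<otimes> g) \<otimes> s \<otimes> inv (x \<otimes> g)"
    using gs x assms inv_mult_group[OF x gs(1)] by (auto simp only: m_assoc m_closed inv_closed)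
  then show "x \<otimes> h \<otimes> inv x \<in> (\<Union>g\<in>carrier G. (\<lambda>s. g \<otimes> s \<otimes> inv g) ` S)"
    using gs x by blast
qed

lemma in_normal_closure:
  assumes "s \<in> S" "s \<in> carrier G" shows "s \<in> normal_closure G S"
proof -
  have "s \<in> (\<lambda>x. \<one> \<otimes> x \<otimes> inv \<one>) ` S" by (rule image_eqI[of _ _ s]) (use assms in simp_all)
  then have "s \<in> (\<Union>g \<in> carrier G. (\<lambda>x. g \<otimes> x \<otimes> inv g) ` S)" by blast
  then show ?thesis unfolding normal_closure_def by (rule generate.incl)
qed

lemma normal_closure_least:
  assumes "N \<lhd> G" "S \<subseteq> N"
  shows "normal_closure G S \<subseteq> N"
  unfolding normal_closure_def
proof (rule generate_subgroup_incl)
  show "subgroup N G" using assms normal_imp_subgroup by blast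
  show "(\<Union>g\<in>carrier G. (\<lambda>s. g \<otimes> s \<otimes> inv g) ` S) \<subseteq> N"
    using assms normal_inv_iff by blast
qed

lemma pq_generate_in_normal_closure:
  fixes p q :: nat and p1 q1 :: int
  assumes A: "A \<in> carrier G" and B: "B \<in> carrier G" and rel: "A [^] p = B [^] q"
    and bez: "int p * p1 + int q * q1 = 1"
  shows "generate G {A, B} \<subseteq> normal_closure G {A [^] q1 \<otimes> B [^] p1}"
proof -
  let ?N = "normal_closure G {A [^] q1 \<otimes> B [^] p1}"
  have N: "?N \<lhd> G" using A B by (intro normal_closure_normal) auto
  have "A [^] q1 \<otimes> B [^] p1 \<in> ?N" using A B by (intro in_normal_closure) auto
  then have "A \<in> ?N \<and> B \<in> ?N" using pq_relation_in_normal[OF N A B rel bez] by simp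
  then show ?thesis using generate_subgroup_incl[of "{A, B}" ?N] N normal_imp_subgroup by blast
qed

end

lemma (in comm_group) pq_common_root:
  fixes p q :: nat and p1 q1 :: int
  assumes A: "A \<in> carrier G" and B: "B \<in> carrier G" and rel: "A [^] p = B [^] q"
    and bez: "int p * p1 + int q * q1 = 1"
  defines "R \<equiv> A [^] q1 \<otimes> B [^] p1"
  shows "R [^] (int q) = A" and "R [^] (int p) = B"
proof -
  have relI: "A [^] (int p) = B [^] (int q)" using rel by (simp add: int_pow_int)
  have "R [^] (int q) = (A [^] q1) [^] (int q) \<otimes> (B [^] p1) [^] (int q)"
    unfolding R_def using A B by (simp add: int_pow_distrib)
  also have "\<dots> = A [^] (q1 * int q) \<otimes> (B [^] (int q)) [^] p1"
    using A B by (simp only: int_pow_pow mult.commute)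
  also have "\<dots> = A [^] (q1 * int q + int p * p1)"
    using A by (simp only: relI[symmetric] int_pow_pow int_pow_mult)
  also have "q1 * int q + int p * p1 = 1" using bez by (simp add: algebra_simps)
  finally show "R [^] (int q) = A" using A by simp
  have "R [^] (int p) = (A [^] q1) [^] (int p) \<otimes> (B [^] p1) [^] (int p)"
    unfolding R_def using A B by (simp add: int_pow_distrib)
  also have "\<dots> = (A [^] (int p)) [^] q1 \<otimes> B [^] (p1 * int p)"
    using A B by (simp only: int_pow_pow mult.commute)
  also have "\<dots> = B [^] (int q * q1 + p1 * int p)"
    using B by (simp only: relI int_pow_pow int_pow_mult)
  also have "int q * q1 + p1 * int p = 1" using bez by (simp add: algebra_simps)
  finally show "R [^] (int p) = B" using B by simp
qed

lemma coprime_bezout_int: "coprime (m::nat) n \<Longrightarrow> \<exists>u v. int m * u + int n * v = 1"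
  using bezout_int[of "int m" "int n"] by (metis coprime_int_iff coprime_iff_gcd_eq_1 mult.commute)

locale pq_group =
  fixes p q :: nat
  assumes p2: "p \<ge> 2" and q2: "q \<ge> 2" and coprime_pq: "coprime p q"
begin

abbreviation "T \<equiv> Gt p q"
abbreviation "a \<equiv> galpha p q"
abbreviation "b \<equiv> gbeta p q"

sublocale T: group "Gt p q" by (rule group_Gt)

definition c where "c = a [^]\<^bsub>T\<^esub> p"

lemma cls_in[simp]: "word_class p q w \<in> carrier T" by (simp add: Gt_carrier)
lemma a_in[simp]: "a \<in> carrier T" by (simp add: galpha_def)
lemma b_in[simp]: "b \<in> carrier T" by (simp add: gbeta_def)
lemma c_in[simp]: "c \<in> carrier T" by (simp add: c_def)

lemma cls_Cons: "word_class p q (l # w) = word_class p q [l] \<otimes>\<^bsub>T\<^esub> word_class p q w"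
  by (simp add: Gt_mult)

lemma cls_Nil: "word_class p q [] = \<one>\<^bsub>T\<^esub>" by (simp add: Gt_one)

lemma cls_replicate:
  "word_class p q (replicate n (g, False)) = (if g = Alpha then a else b) [^]\<^bsub>T\<^esub> n"
proof (induction n)
  case 0 then show ?case by (simp add: cls_Nil)
next
  case (Suc n)
  have gen: "word_class p q [(g,False)] = (if g = Alpha then a else b)"
    by (cases g) (simp_all add: galpha_def gbeta_def)
  have "word_class p q (replicate (Suc n) (g,False))
      = word_class p q [(g,False)] \<otimes>\<^bsub>T\<^esub> word_class p q (replicate n (g,False))"
    by (simp add: Gt_mult)
  also have "\<dots> = (if g = Alpha then a else b) \<otimes>\<^bsub>T\<^esub> (if g = Alpha then a else b) [^]\<^bsub>T\<^esub> n"
    using gen Suc by simp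
  also have "\<dots> = (if g = Alpha then a else b) [^]\<^bsub>T\<^esub> Suc n"
    by (rule T.nat_pow_Suc2[symmetric]) simp
  finally show ?case .
qed

lemma cls_inv_letter: "word_class p q [(g, True)] = inv\<^bsub>T\<^esub> (word_class p q [(g, False)])"
proof -
  have "word_class p q [(g, True)] \<otimes>\<^bsub>T\<^esub> word_class p q [(g, False)] = \<one>\<^bsub>T\<^esub>"
    using word_eq.cancel[of p q "[]" "(g,True)" "[]"]
    by (simp add: Gt_mult Gt_one word_class_eq_iff letter_inv_def)
  then show ?thesis by (simp add: T.inv_equality)
qed

lemma c_b: "c = b [^]\<^bsub>T\<^esub> q"
proof -
  have "word_class p q (replicate p (Alpha, False)) = word_class p q (replicate q (Beta, False))"
    using word_eq.rel[of p q "[]" "[]"] by (simp add: word_class_eq_iff)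
  then show ?thesis by (simp add: c_def cls_replicate)
qed

lemma generate_ab: "generate T {a, b} = carrier T"
proof
  show "generate T {a, b} \<subseteq> carrier T" using T.generate_incl[of "{a,b}"] by auto
next
  have "word_class p q w \<in> generate T {a, b}" for w
  proof (induction w)
    case Nil then show ?case by (simp add: cls_Nil generate.one)
  next
    case (Cons l w)
    obtain g s where l: "l = (g, s)" by (cases l)
    have g: "word_class p q [(g, False)] \<in> generate T {a, b}"
      by (cases g) (auto simp: galpha_def gbeta_def intro: generate.incl)
    have "word_class p q [l] \<in> generate T {a, b}"
      using g by (cases s) (auto simp: l cls_inv_letter intro: T.generate_m_inv_closed)
    then show ?case using Cons cls_Cons[of l w] generate.eng by metis
  qed
  then show "carrier T \<subseteq> generate T {a, b}" by (auto simp: Gt_carrier)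
qed

lemma subgroup_ab: "subgroup H T \<Longrightarrow> a \<in> H \<Longrightarrow> b \<in> H \<Longrightarrow> H = carrier T"
  using T.generate_subgroup_incl[of "{a,b}" H] generate_ab subgroup.subset by blast

lemma hom_eq_on_ab:
  assumes "group K" "h \<in> hom T K" "h' \<in> hom T K" "h a = h' a" "h b = h' b" "g \<in> carrier T"
  shows "h g = h' g"
proof -
  interpret group_hom T K h using assms(1,2) by (simp add: group_hom_def group_hom_axioms_def)
  show ?thesis using hom_eq_on_generate[OF assms(3), of "{a,b}" g] assms(4-6) generate_ab by auto
qed

lemma c_central: "g \<in> carrier T \<Longrightarrow> c \<otimes>\<^bsub>T\<^esub> g = g \<otimes>\<^bsub>T\<^esub> c"
proof -
  have "c \<otimes>\<^bsub>T\<^esub> a = a \<otimes>\<^bsub>T\<^esub> c" unfolding c_def by (metis T.nat_pow_Suc T.nat_pow_Suc2 a_in)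
  moreover have "c \<otimes>\<^bsub>T\<^esub> b = b \<otimes>\<^bsub>T\<^esub> c" unfolding c_b by (metis T.nat_pow_Suc T.nat_pow_Suc2 b_in)
  ultimately show "g \<in> carrier T \<Longrightarrow> c \<otimes>\<^bsub>T\<^esub> g = g \<otimes>\<^bsub>T\<^esub> c"
    using T.commute_generate[of c "{a,b}" g] generate_ab by auto
qed

lemma c_pow_central: "g \<in> carrier T \<Longrightarrow> c [^]\<^bsub>T\<^esub> (m::int) \<otimes>\<^bsub>T\<^esub> g = g \<otimes>\<^bsub>T\<^esub> c [^]\<^bsub>T\<^esub> m"
proof -
  assume g: "g \<in> carrier T"
  have "c [^]\<^bsub>T\<^esub> m \<in> generate T {c}" using T.generate_pow[of c] by auto
  then show ?thesis using T.commute_generate[of g "{c}" "c [^]\<^bsub>T\<^esub> m"] g c_central by auto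
qed

subsection \<open>The degree map \<open>\<lambda> : T \<rightarrow> \<int>\<close>\<close>

text \<open>The abelianisation of \<open>T\<close> is \<open>\<int>\<close>, realised by \<open>a \<mapsto> q\<close>, \<open>b \<mapsto> p\<close>.\<close>
definition lam where "lam = Gt_lift integer_group (int q) (int p)"

lemma lam_hom: "lam \<in> hom T integer_group"
  unfolding lam_def by (rule Gt_lift_hom) auto

sublocale lam: group_hom T integer_group lam
  by (simp add: group_hom_def group_hom_axioms_def lam_hom)

lemma lam_a[simp]: "lam a = int q" and lam_b[simp]: "lam b = int p"
  unfolding lam_def by (rule Gt_lift_gens; auto)+

lemma lam_ipow: "x \<in> carrier T \<Longrightarrow> lam (x [^]\<^bsub>T\<^esub> (n::int)) = n * lam x"
  by (simp add: lam.hom_int_pow)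

lemma lam_npow: "x \<in> carrier T \<Longrightarrow> lam (x [^]\<^bsub>T\<^esub> (n::nat)) = int n * lam x"
  by (simp add: lam.hom_nat_pow)

lemma lam_c[simp]: "lam c = int p * int q"
  by (simp add: c_def lam_npow)

lemma lam_kernel_in_derived:
  assumes g: "g \<in> carrier T" and deg: "lam g = 0"
  shows "g \<in> derived T (carrier T)"
proof -
  let ?D = "derived T (carrier T)" and ?Q = "T Mod derived T (carrier T)"
  obtain p1 q1 where bez: "int p * p1 + int q * q1 = 1" using coprime_bezout_int[OF coprime_pq] by blast
  interpret D: normal ?D T by (rule T.derived_is_normal[OF T.normal_self])
  interpret Q: comm_group ?Q by (rule T.derived_quot_is_comm_group)
  interpret pi: group_hom T ?Q "\<lambda>x. ?D #>\<^bsub>T\<^esub> x"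
    using D.r_coset_hom_Mod by (simp add: group_hom_def group_hom_axioms_def Q.is_group)
  let ?A = "?D #>\<^bsub>T\<^esub> a" and ?B = "?D #>\<^bsub>T\<^esub> b"
  let ?R = "?A [^]\<^bsub>?Q\<^esub> q1 \<otimes>\<^bsub>?Q\<^esub> ?B [^]\<^bsub>?Q\<^esub> p1"
  have A: "?A \<in> carrier ?Q" and B: "?B \<in> carrier ?Q" by simp_all
  have rel: "?A [^]\<^bsub>?Q\<^esub> p = ?B [^]\<^bsub>?Q\<^esub> q"
    by (simp add: pi.hom_nat_pow[symmetric] c_b[symmetric] c_def[symmetric])
  note root = Q.pq_common_root[OF A B rel bez]
  have R: "?R \<in> carrier ?Q" using A B by (intro Q.m_closed Q.int_pow_closed)
  text \<open>The projection to \<open>T/T'\<close> factors as \<open>g \<mapsto> R^{\<lambda> g}\<close>.\<close>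
  have factor: "(\<lambda>n. ?R [^]\<^bsub>?Q\<^esub> n) \<circ> lam \<in> hom T ?Q"
    using lam_hom Q.hom_integer_group_pow[OF R] by (rule hom_compose)
  have "?D #>\<^bsub>T\<^esub> g = ((\<lambda>n. ?R [^]\<^bsub>?Q\<^esub> n) \<circ> lam) g"
    by (rule hom_eq_on_ab[OF Q.is_group D.r_coset_hom_Mod factor _ _ g]) (use root in simp_all)
  then have "?D #>\<^bsub>T\<^esub> g = ?D" using deg by simp
  then show ?thesis using T.rcos_eq_self_imp_mem[OF D.subgroup_axioms g] by simp
qed

end

subsection \<open>Normal forms and the centre of \<open>T\<close>\<close>

text \<open>A syllable \<open>(f, i)\<close> stands for \<open>b^i\<close> if \<open>f\<close> and for \<open>a^i\<close> otherwise.  A syllable list is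
  reduced if all exponents lie strictly between \<open>0\<close> and the order of the generator modulo
  \<open>c\<close> (that is, \<open>p\<close> resp. \<open>q\<close>) and adjacent syllables alternate.  Every element of \<open>T\<close> is
  \<open>c^m\<close> times a reduced word, and the left action of words on reduced lists (\<open>act\<close>)
  respects the relation, which makes reduced lists faithful enough to show that only
  powers of \<open>c\<close> are central.\<close>

type_synonym syl = "bool \<times> nat"

definition syl_bound :: "nat \<Rightarrow> nat \<Rightarrow> bool \<Rightarrow> nat" where
  "syl_bound p q f = (if f then q else p)"

definition syl_gen :: "bool \<Rightarrow> gen" where "syl_gen f = (if f then Beta else Alpha)"
definition syl_side :: "gen \<Rightarrow> bool" where "syl_side g = (g = Beta)"

lemma syl_side_gen[simp]: "syl_side (syl_gen f) = f" by (simp add: syl_side_def syl_gen_def)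
lemma syl_gen_side[simp]: "syl_gen (syl_side g) = g" by (cases g) (simp_all add: syl_side_def syl_gen_def)

fun reduced :: "nat \<Rightarrow> nat \<Rightarrow> syl list \<Rightarrow> bool" where
  "reduced p q [] = True"
| "reduced p q (x # w) = (0 < snd x \<and> snd x < syl_bound p q (fst x) \<and> reduced p q w \<and> (w = [] \<or> fst (hd w) \<noteq> fst x))"

definition head_not :: "bool \<Rightarrow> syl list \<Rightarrow> bool" where
  "head_not f w = (w = [] \<or> fst (hd w) \<noteq> f)"

text \<open>Left multiplication of a reduced list by the generator of side \<open>f\<close>, cancelling
  a full power of that generator (which equals \<open>c\<close>).\<close>
fun push :: "nat \<Rightarrow> nat \<Rightarrow> bool \<Rightarrow> syl list \<Rightarrow> syl list" where
  "push p q f [] = [(f, 1)]"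
| "push p q f ((g, i) # w) = (if g = f then (if Suc i = syl_bound p q f then w else (g, Suc i) # w) else (f, 1) # (g, i) # w)"

fun act :: "nat \<Rightarrow> nat \<Rightarrow> letter list \<Rightarrow> syl list \<Rightarrow> syl list" where
  "act p q [] v = v"
| "act p q (l # u) v = (if snd l then (push p q (syl_side (fst l)) ^^ (syl_bound p q (syl_side (fst l)) - 1)) else push p q (syl_side (fst l))) (act p q u v)"

fun syl_word :: "syl list \<Rightarrow> letter list" where
  "syl_word [] = []"
| "syl_word (x # w) = replicate (snd x) (syl_gen (fst x), False) @ syl_word w"

lemma act_append: "act p q (u @ u') v = act p q u (act p q u' v)"
  by (induction u) auto

lemma act_rep: "act p q (replicate n (g, False)) v = (push p q (syl_side g) ^^ n) v"
  by (induction n) auto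

context pq_group begin

lemma syl_bound_ge2: "syl_bound p q f \<ge> 2" using p2 q2 by (simp add: syl_bound_def)

lemma push_pow_head:
  assumes "head_not f w" "0 < k" "k < syl_bound p q f"
  shows "(push p q f ^^ k) w = (f, k) # w"
  using assms(2,3)
proof (induction k)
  case 0 then show ?case by simp
next
  case (Suc k)
  show ?case
  proof (cases "k = 0")
    case True
    then show ?thesis using assms(1) by (cases w) (auto simp: head_not_def)
  next
    case False
    then have "(push p q f ^^ k) w = (f, k) # w" using Suc by simp
    then show ?thesis using Suc by simp
  qed
qed

lemma push_pow_bound_head:
  assumes "head_not f w"
  shows "(push p q f ^^ syl_bound p q f) w = w"
proof -
  have m: "syl_bound p q f = Suc (syl_bound p q f - 1)" using syl_bound_ge2[of f] by simp
  have "(push p q f ^^ (syl_bound p q f - 1)) w = (f, syl_bound p q f - 1) # w"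
    using push_pow_head[OF assms] syl_bound_ge2[of f] by simp
  then have "(push p q f ^^ Suc (syl_bound p q f - 1)) w = push p q f ((f, syl_bound p q f - 1) # w)"
    by simp
  also have "\<dots> = w" using m by simp
  finally show ?thesis using m by metis
qed

lemma reduced_Cons: "reduced p q ((f, i) # w) \<Longrightarrow> head_not f w \<and> reduced p q w \<and> 0 < i \<and> i < syl_bound p q f"
  by (auto simp: head_not_def)

text \<open>Pushing a full power (\<open>p\<close> copies of \<open>a\<close>, resp. \<open>q\<close> copies of \<open>b\<close>) fixes every
  reduced list; this is what makes the action respect \<open>a^p = b^q\<close> and cancellation.\<close>
lemma push_pow_bound:
  assumes "reduced p q w"
  shows "(push p q f ^^ syl_bound p q f) w = w"
proof (cases "head_not f w")
  case True then show ?thesis by (rule push_pow_bound_head)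
next
  case False
  then obtain i w' where w: "w = (f, i) # w'" by (cases w) (auto simp: head_not_def)
  then have h: "head_not f w'" "0 < i" "i < syl_bound p q f" using reduced_Cons assms by blast+
  have wi: "w = (push p q f ^^ i) w'" using push_pow_head[OF h] w by simp
  have "(push p q f ^^ syl_bound p q f) w = (push p q f ^^ (syl_bound p q f + i)) w'"
    by (simp add: wi funpow_add)
  also have "\<dots> = (push p q f ^^ i) ((push p q f ^^ syl_bound p q f) w')"
    by (simp add: funpow_add add.commute)
  also have "\<dots> = w" using push_pow_bound_head[OF h(1)] wi by simp
  finally show ?thesis .
qed

lemma reduced_push: "reduced p q w \<Longrightarrow> reduced p q (push p q f w)"
proof (cases w)
  case Nil then show ?thesis using syl_bound_ge2[of f] by simp
next
  case (Cons x w')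
  assume r: "reduced p q w"
  obtain g i where x: "x = (g, i)" by (cases x)
  show ?thesis using r syl_bound_ge2[of f] unfolding Cons x
    by (cases w') (auto simp: head_not_def)
qed

lemma reduced_push_pow: "reduced p q w \<Longrightarrow> reduced p q ((push p q f ^^ n) w)"
  by (induction n) (auto simp: reduced_push)

lemma reduced_act: "reduced p q v \<Longrightarrow> reduced p q (act p q u v)"
  by (induction u) (auto simp: reduced_push reduced_push_pow)

lemma act_word_eq:
  "word_eq p q u u' \<Longrightarrow> reduced p q v \<Longrightarrow> act p q u v = act p q u' v"
proof (induction arbitrary: v rule: word_eq.induct)
  case (cancel u x w)
  obtain g s where x: "x = (g, s)" by (cases x)
  let ?f = "syl_side g"
  have r: "reduced p q (act p q w v)" using cancel reduced_act by blast
  have m: "syl_bound p q ?f = Suc (syl_bound p q ?f - 1)" using syl_bound_ge2[of ?f] by simp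
  have "act p q ([x, letter_inv x] @ w) v = act p q w v"
  proof (cases s)
    case True
    have "(push p q ?f ^^ (syl_bound p q ?f - 1)) (push p q ?f (act p q w v)) = (push p q ?f ^^ Suc (syl_bound p q ?f - 1)) (act p q w v)"
      by (simp only: funpow_Suc_right comp_def)
    also have "\<dots> = act p q w v" using m push_pow_bound[OF r] by metis
    finally show ?thesis using True by (simp add: x letter_inv_def)
  next
    case False
    have "push p q ?f ((push p q ?f ^^ (syl_bound p q ?f - 1)) (act p q w v)) = (push p q ?f ^^ Suc (syl_bound p q ?f - 1)) (act p q w v)"
      by simp
    also have "\<dots> = act p q w v" using m push_pow_bound[OF r] by metis
    finally show ?thesis using False by (simp add: x letter_inv_def)
  qed
  then show ?case by (simp add: act_append)
next
  case (rel u w)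
  have r: "reduced p q (act p q w v)" using rel reduced_act by blast
  have "act p q (replicate p (Alpha, False) @ w) v = act p q (replicate q (Beta, False) @ w) v"
    using push_pow_bound[OF r, of False] push_pow_bound[OF r, of True]
    by (simp add: act_append act_rep syl_side_def syl_bound_def)
  then show ?case by (simp add: act_append)
next
  case (sym u v') then show ?case by simp
next
  case (trans u v' w) then show ?case by simp
qed simp

lemma act_syl_word: "reduced p q (w @ v) \<Longrightarrow> act p q (syl_word w) v = w @ v"
proof (induction w)
  case Nil then show ?case by simp
next
  case (Cons x w)
  obtain f i where x: "x = (f, i)" by (cases x)
  have h: "head_not f (w @ v)" "reduced p q (w @ v)" "0 < i" "i < syl_bound p q f"
    using reduced_Cons[of f i "w @ v"] Cons.prems x by auto
  have "act p q (syl_word (x # w)) v = (push p q f ^^ i) (w @ v)"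
    using Cons.IH[OF h(2)] by (simp add: x act_append act_rep)
  also have "\<dots> = x # w @ v" using push_pow_head[OF h(1) h(3) h(4)] x by simp
  finally show ?case by simp
qed

lemma reduced_snoc:
  "reduced p q w \<Longrightarrow> w \<noteq> [] \<Longrightarrow> fst (last w) \<noteq> f \<Longrightarrow> 0 < i \<Longrightarrow> i < syl_bound p q f \<Longrightarrow> reduced p q (w @ [(f, i)])"
proof (induction w)
  case Nil then show ?case by simp
next
  case (Cons x w)
  show ?case
  proof (cases "w = []")
    case True then show ?thesis using Cons.prems by auto
  next
    case False then show ?thesis using Cons by auto
  qed
qed

definition syl_elem where "syl_elem w = word_class p q (syl_word w)"

lemma syl_elem_in[simp]: "syl_elem w \<in> carrier T" by (simp add: syl_elem_def)

lemma cls_syl_bound: "word_class p q (replicate (syl_bound p q f) (syl_gen f, False)) = c"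
proof (cases f)
  case True then show ?thesis by (simp add: cls_replicate syl_bound_def syl_gen_def c_b)
next
  case False then show ?thesis by (simp add: cls_replicate syl_bound_def syl_gen_def c_def)
qed

text \<open>\<open>x\<close> maps every reduced element to a power of \<open>c\<close> times a reduced element; this
  property is closed under products and holds for letters, hence for all of \<open>T\<close>.\<close>
definition normalizes where
  "normalizes x \<longleftrightarrow> (\<forall>w. reduced p q w \<longrightarrow> (\<exists>(d::int) w'. reduced p q w' \<and> x \<otimes>\<^bsub>T\<^esub> syl_elem w = c [^]\<^bsub>T\<^esub> d \<otimes>\<^bsub>T\<^esub> syl_elem w'))"

lemma normalizes_mult:
  assumes "x \<in> carrier T" "y \<in> carrier T" "normalizes x" "normalizes y"
  shows "normalizes (x \<otimes>\<^bsub>T\<^esub> y)"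
  unfolding normalizes_def
proof (intro allI impI)
  fix w assume "reduced p q w"
  then obtain d :: int and w' where 1: "reduced p q w'" "y \<otimes>\<^bsub>T\<^esub> syl_elem w = c [^]\<^bsub>T\<^esub> d \<otimes>\<^bsub>T\<^esub> syl_elem w'"
    using assms(4) unfolding normalizes_def by blast
  then obtain d' :: int and w'' where 2: "reduced p q w''" "x \<otimes>\<^bsub>T\<^esub> syl_elem w' = c [^]\<^bsub>T\<^esub> d' \<otimes>\<^bsub>T\<^esub> syl_elem w''"
    using assms(3) unfolding normalizes_def by blast
  have "x \<otimes>\<^bsub>T\<^esub> y \<otimes>\<^bsub>T\<^esub> syl_elem w = x \<otimes>\<^bsub>T\<^esub> (c [^]\<^bsub>T\<^esub> d \<otimes>\<^bsub>T\<^esub> syl_elem w')"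
    using assms 1 by (simp add: T.m_assoc)
  also have "\<dots> = c [^]\<^bsub>T\<^esub> d \<otimes>\<^bsub>T\<^esub> (x \<otimes>\<^bsub>T\<^esub> syl_elem w')"
    using assms c_pow_central[of x d] by (simp add: T.m_assoc[symmetric])
  also have "\<dots> = c [^]\<^bsub>T\<^esub> (d + d') \<otimes>\<^bsub>T\<^esub> syl_elem w''"
    using 2 by (simp add: T.int_pow_mult T.m_assoc)
  finally show "\<exists>(d::int) w'. reduced p q w' \<and> x \<otimes>\<^bsub>T\<^esub> y \<otimes>\<^bsub>T\<^esub> syl_elem w = c [^]\<^bsub>T\<^esub> d \<otimes>\<^bsub>T\<^esub> syl_elem w'"
    using 2 by blast
qed

lemma normalizes_one: "normalizes \<one>\<^bsub>T\<^esub>"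
  unfolding normalizes_def by (metis syl_elem_in int_pow_0 T.l_one)

lemma normalizes_c: "normalizes (c [^]\<^bsub>T\<^esub> (m::int))"
  unfolding normalizes_def by (metis syl_elem_in T.int_pow_mult c_in T.m_assoc T.int_pow_closed)

lemma normalizes_letter: "normalizes (word_class p q [(g, False)])"
  unfolding normalizes_def
proof (intro allI impI)
  fix w assume rw: "reduced p q w"
  let ?f = "syl_side g"
  let ?X = "word_class p q [(g, False)]"
  show "\<exists>(d::int) w'. reduced p q w' \<and> ?X \<otimes>\<^bsub>T\<^esub> syl_elem w = c [^]\<^bsub>T\<^esub> d \<otimes>\<^bsub>T\<^esub> syl_elem w'"
  proof (cases "head_not ?f w")
    case True
    have "reduced p q ((?f, 1) # w)" using True rw syl_bound_ge2[of ?f] by (auto simp: head_not_def)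
    moreover have "?X \<otimes>\<^bsub>T\<^esub> syl_elem w = c [^]\<^bsub>T\<^esub> (0::int) \<otimes>\<^bsub>T\<^esub> syl_elem ((?f, 1) # w)"
      by (simp add: syl_elem_def Gt_mult)
    ultimately show ?thesis by blast
  next
    case False
    then obtain i w' where w: "w = (?f, i) # w'" by (cases w) (auto simp: head_not_def)
    then have h: "head_not ?f w'" "reduced p q w'" "0 < i" "i < syl_bound p q ?f" using reduced_Cons rw by blast+
    have e: "?X \<otimes>\<^bsub>T\<^esub> syl_elem w = word_class p q (replicate (Suc i) (g, False) @ syl_word w')"
      by (simp add: syl_elem_def Gt_mult w)
    show ?thesis
    proof (cases "Suc i = syl_bound p q ?f")
      case True
      have "?X \<otimes>\<^bsub>T\<^esub> syl_elem w = c [^]\<^bsub>T\<^esub> (1::int) \<otimes>\<^bsub>T\<^esub> syl_elem w'"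
        using e cls_syl_bound[of ?f] True by (simp add: Gt_mult[symmetric] syl_elem_def)
      then show ?thesis using h by blast
    next
      case False
      have "reduced p q ((?f, Suc i) # w')" using h False by (auto simp: head_not_def)
      moreover have "?X \<otimes>\<^bsub>T\<^esub> syl_elem w = c [^]\<^bsub>T\<^esub> (0::int) \<otimes>\<^bsub>T\<^esub> syl_elem ((?f, Suc i) # w')"
        using e by (simp add: syl_elem_def)
      ultimately show ?thesis by blast
    qed
  qed
qed

lemma normalizes_pow: "x \<in> carrier T \<Longrightarrow> normalizes x \<Longrightarrow> normalizes (x [^]\<^bsub>T\<^esub> (n::nat))"
  by (induction n) (auto simp: normalizes_one normalizes_mult)

lemma normalizes_inv_letter: "normalizes (word_class p q [(g, True)])"
proof -
  let ?f = "syl_side g"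
  let ?X = "word_class p q [(g, False)]"
  have X: "?X [^]\<^bsub>T\<^esub> syl_bound p q ?f = c"
    using cls_syl_bound[of ?f] cls_replicate[of "syl_bound p q ?f" g] by (cases g) (auto simp: galpha_def gbeta_def)
  have m: "syl_bound p q ?f = Suc (syl_bound p q ?f - 1)" using syl_bound_ge2[of ?f] by simp
  have "?X [^]\<^bsub>T\<^esub> (syl_bound p q ?f - 1) \<otimes>\<^bsub>T\<^esub> ?X = c"
    using X m by (metis T.nat_pow_Suc)
  then have "(inv\<^bsub>T\<^esub> c \<otimes>\<^bsub>T\<^esub> ?X [^]\<^bsub>T\<^esub> (syl_bound p q ?f - 1)) \<otimes>\<^bsub>T\<^esub> ?X = \<one>\<^bsub>T\<^esub>"
    by (simp add: T.m_assoc)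
  then have "inv\<^bsub>T\<^esub> ?X = inv\<^bsub>T\<^esub> c \<otimes>\<^bsub>T\<^esub> ?X [^]\<^bsub>T\<^esub> (syl_bound p q ?f - 1)"
    by (rule T.inv_equality) simp_all
  then have "word_class p q [(g, True)] = c [^]\<^bsub>T\<^esub> (-1::int) \<otimes>\<^bsub>T\<^esub> ?X [^]\<^bsub>T\<^esub> (syl_bound p q ?f - 1)"
    by (simp add: cls_inv_letter T.int_pow_neg)
  then show ?thesis
    using normalizes_mult[OF _ _ normalizes_c normalizes_pow[OF _ normalizes_letter]] by simp
qed

lemma normal_form: "\<exists>(m::int) w. reduced p q w \<and> word_class p q u = c [^]\<^bsub>T\<^esub> m \<otimes>\<^bsub>T\<^esub> syl_elem w"
proof -
  have "normalizes (word_class p q u)"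
  proof (induction u)
    case Nil then show ?case using normalizes_one by (simp add: cls_Nil)
  next
    case (Cons l u)
    obtain g s where l: "l = (g, s)" by (cases l)
    have "normalizes (word_class p q [l])" using normalizes_letter normalizes_inv_letter by (cases s) (auto simp: l)
    then show ?case using Cons normalizes_mult cls_Cons[of l u] by (metis cls_in)
  qed
  then have "\<exists>(m::int) w. reduced p q w \<and> word_class p q u \<otimes>\<^bsub>T\<^esub> syl_elem [] = c [^]\<^bsub>T\<^esub> m \<otimes>\<^bsub>T\<^esub> syl_elem w"
    unfolding normalizes_def by (metis reduced.simps(1))
  then obtain m :: int and w where "reduced p q w" "word_class p q u \<otimes>\<^bsub>T\<^esub> syl_elem [] = c [^]\<^bsub>T\<^esub> m \<otimes>\<^bsub>T\<^esub> syl_elem w"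
    by blast
  then show ?thesis by (auto simp: syl_elem_def cls_Nil)
qed

text \<open>A non-empty reduced element \<open>w\<close> does not commute with the generator \<open>v\<close> opposite to
  its last syllable: \<open>w v\<close> is reduced, whereas \<open>v w\<close> acts differently on the empty list.\<close>
lemma syl_elem_not_central:
  assumes "reduced p q w" "w \<noteq> []"
  shows "\<exists>y \<in> carrier T. syl_elem w \<otimes>\<^bsub>T\<^esub> y \<noteq> y \<otimes>\<^bsub>T\<^esub> syl_elem w"
proof (rule ccontr)
  assume "\<not> ?thesis"
  then have cen: "\<And>y. y \<in> carrier T \<Longrightarrow> syl_elem w \<otimes>\<^bsub>T\<^esub> y = y \<otimes>\<^bsub>T\<^esub> syl_elem w" by blast
  define f where "f = (\<not> fst (last w))"
  define v where "v = [(f, 1::nat)]"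
  have rv: "reduced p q v" using syl_bound_ge2[of f] by (simp add: v_def)
  have rwv: "reduced p q (w @ v)" unfolding v_def using reduced_snoc[OF assms, of f 1] syl_bound_ge2[of f] f_def by simp
  have "syl_elem w \<otimes>\<^bsub>T\<^esub> syl_elem v = syl_elem v \<otimes>\<^bsub>T\<^esub> syl_elem w" using cen by simp
  then have "word_eq p q (syl_word w @ syl_word v) (syl_word v @ syl_word w)"
    by (simp add: syl_elem_def Gt_mult word_class_eq_iff)
  then have "act p q (syl_word w @ syl_word v) [] = act p q (syl_word v @ syl_word w) []"
    by (rule act_word_eq) simp
  moreover have "act p q (syl_word w @ syl_word v) [] = w @ v"
    using act_syl_word[of v "[]"] act_syl_word[OF rwv] rv by (simp add: act_append)
  moreover have "act p q (syl_word v @ syl_word w) [] = push p q f w"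
    using act_syl_word[of w "[]"] assms by (simp add: act_append v_def)
  ultimately have eq: "w @ v = push p q f w" by simp
  obtain g i w' where w: "w = (g, i) # w'" using assms(2) by (cases w) auto
  show False
  proof (cases "g = f")
    case True
    have "length (push p q f w) \<le> length w" using True by (simp add: w)
    moreover have "length (w @ v) = length (push p q f w)" using eq by simp
    ultimately show False by (simp add: v_def)
  next
    case False
    then have "push p q f w = (f, 1) # w" by (simp add: w)
    then show False using eq False by (simp add: w)
  qed
qed

lemma center_T: "center T = range (\<lambda>m::int. c [^]\<^bsub>T\<^esub> m)"
proof
  show "range (\<lambda>m::int. c [^]\<^bsub>T\<^esub> m) \<subseteq> center T"
    using c_pow_central by (auto simp: center_def)
next
  show "center T \<subseteq> range (\<lambda>m::int. c [^]\<^bsub>T\<^esub> m)"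
  proof
    fix g assume g: "g \<in> center T"
    then obtain u where u: "g = word_class p q u" by (auto simp: center_def Gt_carrier)
    obtain m :: int and w where mw: "reduced p q w" "word_class p q u = c [^]\<^bsub>T\<^esub> m \<otimes>\<^bsub>T\<^esub> syl_elem w"
      using normal_form by blast
    show "g \<in> range (\<lambda>m::int. c [^]\<^bsub>T\<^esub> m)"
    proof (cases "w = []")
      case True then show ?thesis using mw u by (simp add: syl_elem_def cls_Nil)
    next
      case False
      have Ew: "syl_elem w = inv\<^bsub>T\<^esub> (c [^]\<^bsub>T\<^esub> m) \<otimes>\<^bsub>T\<^esub> g"
        using mw u by (simp add: T.m_assoc[symmetric])
      have gc: "\<And>y. y \<in> carrier T \<Longrightarrow> g \<otimes>\<^bsub>T\<^esub> y = y \<otimes>\<^bsub>T\<^esub> g" using g by (auto simp: center_def)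
      have "syl_elem w \<otimes>\<^bsub>T\<^esub> y = y \<otimes>\<^bsub>T\<^esub> syl_elem w" if y: "y \<in> carrier T" for y
      proof -
        have ci: "inv\<^bsub>T\<^esub> (c [^]\<^bsub>T\<^esub> m) = c [^]\<^bsub>T\<^esub> (-m)" by (simp add: T.int_pow_neg)
        have gin: "g \<in> carrier T" using g by (auto simp: center_def)
        show ?thesis unfolding Ew ci
          using c_pow_central[OF y, of "-m"] gc[OF y] y gin
          by (metis T.int_pow_closed T.m_assoc c_in)
      qed
      then show ?thesis using syl_elem_not_central[OF mw(1) False] by blast
    qed
  qed
qed

lemma center_T_subgroup: "subgroup (center T) T"
  unfolding center_T by (rule T.subgroup_of_powers) simp

subsection \<open>Power endomorphisms\<close>

text \<open>Since \<open>(a^n)^p = c^n = (b^n)^q\<close>, the assignment \<open>a \<mapsto> a^n\<close>, \<open>b \<mapsto> b^n\<close> defines an endomorphism.\<close>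
definition pow_endo :: "nat \<Rightarrow> letter list set \<Rightarrow> letter list set" where
  "pow_endo n = Gt_lift T (a [^]\<^bsub>T\<^esub> n) (b [^]\<^bsub>T\<^esub> n)"

lemma pow_rel:
  "(a [^]\<^bsub>T\<^esub> (n::nat)) [^]\<^bsub>T\<^esub> p = c [^]\<^bsub>T\<^esub> n" "(b [^]\<^bsub>T\<^esub> (n::nat)) [^]\<^bsub>T\<^esub> q = c [^]\<^bsub>T\<^esub> n"
  by (simp add: T.nat_pow_pow c_def mult.commute, simp add: T.nat_pow_pow c_b mult.commute)

lemma pow_endo_hom: "pow_endo n \<in> hom T T"
  unfolding pow_endo_def by (rule Gt_lift_hom) (auto simp: pow_rel)

lemma pow_endo_group_hom: "group_hom T T (pow_endo n)"
  by (simp add: group_hom_def group_hom_axioms_def pow_endo_hom)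

lemma pow_endo_a[simp]: "pow_endo n a = a [^]\<^bsub>T\<^esub> n"
  and pow_endo_b[simp]: "pow_endo n b = b [^]\<^bsub>T\<^esub> n"
  unfolding pow_endo_def by (rule Gt_lift_gens; auto simp: pow_rel)+

lemma pow_endo_c: "pow_endo n c = c [^]\<^bsub>T\<^esub> n"
  by (simp add: c_def group_hom.hom_nat_pow[OF pow_endo_group_hom] pow_rel)

lemma lam_pow_endo: "g \<in> carrier T \<Longrightarrow> lam (pow_endo n g) = int n * lam g"
proof -
  assume g: "g \<in> carrier T"
  have "(\<lambda>g. int n * lam g) \<in> hom T integer_group"
    by (rule homI) (simp_all add: distrib_left)
  then have "(lam \<circ> pow_endo n) g = int n * lam g"
    using hom_eq_on_ab[OF group_integer_group hom_compose[OF pow_endo_hom lam_hom] _ _ _ g]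
    by (simp add: lam_npow)
  then show ?thesis by simp
qed

lemma pow_endo_comp: "g \<in> carrier T \<Longrightarrow> pow_endo s (pow_endo n g) = pow_endo (s * n) g"
proof -
  assume g: "g \<in> carrier T"
  have "(pow_endo s \<circ> pow_endo n) g = pow_endo (s * n) g"
    by (rule hom_eq_on_ab[OF T.is_group hom_compose[OF pow_endo_hom pow_endo_hom] pow_endo_hom _ _ g])
       (simp_all add: group_hom.hom_nat_pow[OF pow_endo_group_hom] T.nat_pow_pow)
  then show ?thesis by simp
qed

text \<open>The twist \<open>g \<mapsto> g c^{k \<lambda>(g)}\<close> is an injective endomorphism (it multiplies degrees by
  \<open>1 + kpq \<noteq> 0\<close>).\<close>
definition twist :: "nat \<Rightarrow> letter list set \<Rightarrow> letter list set" where
  "twist k g = g \<otimes>\<^bsub>T\<^esub> c [^]\<^bsub>T\<^esub> (int k * lam g)"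

lemma twist_hom: "twist k \<in> hom T T"
proof (rule homI)
  fix x assume "x \<in> carrier T" then show "twist k x \<in> carrier T" by (simp add: twist_def)
next
  fix x y assume x: "x \<in> carrier T" and y: "y \<in> carrier T"
  have "twist k (x \<otimes>\<^bsub>T\<^esub> y)
      = x \<otimes>\<^bsub>T\<^esub> y \<otimes>\<^bsub>T\<^esub> (c [^]\<^bsub>T\<^esub> (int k * lam x) \<otimes>\<^bsub>T\<^esub> c [^]\<^bsub>T\<^esub> (int k * lam y))"
    using x y by (simp add: twist_def T.int_pow_mult distrib_left)
  also have "\<dots> = x \<otimes>\<^bsub>T\<^esub> (y \<otimes>\<^bsub>T\<^esub> c [^]\<^bsub>T\<^esub> (int k * lam x)) \<otimes>\<^bsub>T\<^esub> c [^]\<^bsub>T\<^esub> (int k * lam y)"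
    using x y by (simp add: T.m_assoc)
  also have "\<dots> = x \<otimes>\<^bsub>T\<^esub> (c [^]\<^bsub>T\<^esub> (int k * lam x) \<otimes>\<^bsub>T\<^esub> y) \<otimes>\<^bsub>T\<^esub> c [^]\<^bsub>T\<^esub> (int k * lam y)"
    using y c_pow_central by simp
  also have "\<dots> = twist k x \<otimes>\<^bsub>T\<^esub> twist k y"
    using x y by (simp add: twist_def T.m_assoc)
  finally show "twist k (x \<otimes>\<^bsub>T\<^esub> y) = twist k x \<otimes>\<^bsub>T\<^esub> twist k y" .
qed

lemma twist_inj: "inj_on (twist k) (carrier T)"
proof -
  interpret tw: group_hom T T "twist k"
    by (simp add: group_hom_def group_hom_axioms_def twist_hom)
  show ?thesis
  proof (subst tw.inj_on_one_iff, intro allI impI)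
    fix g assume g: "g \<in> carrier T" and triv: "twist k g = \<one>\<^bsub>T\<^esub>"
    then have "lam (twist k g) = 0" by simp
    then have "lam g * (1 + int k * int p * int q) = 0"
      using g by (simp add: twist_def lam_ipow algebra_simps)
    moreover have "1 + int k * int p * int q \<noteq> 0"
      by (smt (verit) mult_nonneg_nonneg of_nat_0_le_iff)
    ultimately have "lam g = 0" by simp
    then show "g = \<one>\<^bsub>T\<^esub>" using triv g by (simp add: twist_def)
  qed
qed

lemma pow_endo_twist: "g \<in> carrier T \<Longrightarrow> pow_endo (Suc (p * q * k)) g = twist k g"
proof -
  assume g: "g \<in> carrier T"
  have ta: "pow_endo (Suc (p * q * k)) a = twist k a"
  proof -
    have "pow_endo (Suc (p * q * k)) a = a \<otimes>\<^bsub>T\<^esub> a [^]\<^bsub>T\<^esub> (p * (q * k))"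
      using T.nat_pow_Suc2[of a "p * (q * k)"] by (simp add: mult.assoc)
    also have "\<dots> = a \<otimes>\<^bsub>T\<^esub> c [^]\<^bsub>T\<^esub> (q * k)" by (simp add: T.nat_pow_pow c_def)
    also have "\<dots> = twist k a" by (simp add: twist_def int_pow_int[symmetric] mult.commute)
    finally show ?thesis .
  qed
  have tb: "pow_endo (Suc (p * q * k)) b = twist k b"
  proof -
    have "pow_endo (Suc (p * q * k)) b = b \<otimes>\<^bsub>T\<^esub> b [^]\<^bsub>T\<^esub> (q * (p * k))"
      using T.nat_pow_Suc2[of b "q * (p * k)"] by (simp add: mult.assoc mult.left_commute)
    also have "\<dots> = b \<otimes>\<^bsub>T\<^esub> c [^]\<^bsub>T\<^esub> (p * k)" by (simp add: T.nat_pow_pow c_b)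
    also have "\<dots> = twist k b" by (simp add: twist_def int_pow_int[symmetric] mult.commute)
    finally show ?thesis .
  qed
  show ?thesis by (rule hom_eq_on_ab[OF T.is_group pow_endo_hom twist_hom ta tb g])
qed

text \<open>For \<open>n\<close> coprime to \<open>pq\<close> choose \<open>ns = 1 + kpq\<close>; then \<open>\<phi>\<^sub>s \<circ> \<phi>\<^sub>n\<close> is the twist, so \<open>\<phi>\<^sub>n\<close> is injective.\<close>
lemma pow_endo_inj:
  assumes "coprime n (p * q)"
  shows "inj_on (pow_endo n) (carrier T)"
proof -
  have "n \<noteq> 0"
  proof
    assume "n = 0"
    then show False using assms p2 by simp
  qed
  then obtain s k where sk: "n * s = p * q * k + 1"
    using bezout_nat[of n "p * q"] assms by auto
  have "pow_endo s (pow_endo n g) = twist k g" if "g \<in> carrier T" for g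
    using that sk pow_endo_comp[of g s n] pow_endo_twist[of g k] by (simp add: mult.commute)
  then have "inj_on (pow_endo s \<circ> pow_endo n) (carrier T)"
    using twist_inj inj_on_cong[of "carrier T" "pow_endo s \<circ> pow_endo n" "twist k"] by simp
  then show ?thesis by (rule inj_on_imageI2)
qed

end

section \<open>The subgroup \<open>G\<^sub>r = \<langle>a^r, b^r\<rangle>\<close>\<close>

locale pq_subgroup = pq_group +
  fixes r :: nat
  assumes r1: "r \<ge> 1" and coprime_rp: "coprime r p" and coprime_rq: "coprime r q"
begin

abbreviation "ar \<equiv> a [^]\<^bsub>T\<^esub> r"
abbreviation "br \<equiv> b [^]\<^bsub>T\<^esub> r"
abbreviation "Gr \<equiv> generate T {ar, br}"
abbreviation "Grs \<equiv> T\<lparr>carrier := Gr\<rparr>"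
abbreviation "D \<equiv> derived T (carrier T)"
abbreviation "phi \<equiv> pow_endo r"

lemma Gr_subgroup: "subgroup Gr T" by (rule T.generate_is_subgroup) auto
lemma Gr_sub: "Gr \<subseteq> carrier T" using Gr_subgroup subgroup.subset by blast
lemma ar_Gr: "ar \<in> Gr" and br_Gr: "br \<in> Gr" by (auto intro: generate.incl)
lemma Grs_group: "group Grs" using T.subgroup_imp_group[OF Gr_subgroup] .

lemma Gr_pow: "x \<in> Gr \<Longrightarrow> x [^]\<^bsub>T\<^esub> (k::int) \<in> Gr"
  using T.subgroup_int_pow_closed[OF Gr_subgroup] by blast

lemma phi_image: "phi ` carrier T = Gr"
proof -
  have "generate T (phi ` {a, b}) = phi ` generate T {a, b}"
    by (rule group_hom.generate_img[OF pow_endo_group_hom]) auto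
  then show ?thesis by (simp add: generate_ab)
qed

lemma phi_inj: "inj_on phi (carrier T)"
  using pow_endo_inj coprime_rp coprime_rq by simp

lemma phi_iso: "phi \<in> iso T Grs"
proof -
  have "phi \<in> hom T Grs"
    by (rule homI) (use phi_image in \<open>auto simp: group_hom.hom_mult[OF pow_endo_group_hom]\<close>)
  then show ?thesis using phi_inj phi_image by (simp add: iso_def bij_betw_def)
qed

lemma c_pow_r_Gr: "c [^]\<^bsub>T\<^esub> (int r * k) \<in> Gr"
proof -
  have "c [^]\<^bsub>T\<^esub> (int r * k) = (c [^]\<^bsub>T\<^esub> (int r)) [^]\<^bsub>T\<^esub> k" by (simp add: T.int_pow_pow)
  also have "\<dots> = (ar [^]\<^bsub>T\<^esub> p) [^]\<^bsub>T\<^esub> k" by (simp add: int_pow_int pow_rel)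
  also have "\<dots> = ar [^]\<^bsub>T\<^esub> (int p * k)"
    by (simp add: T.int_pow_pow int_pow_int[symmetric] mult.assoc)
  finally show ?thesis using Gr_pow[OF ar_Gr] by simp
qed

lemma Gr_times_c_subgroup: "subgroup {g \<in> carrier T. \<exists>x\<in>Gr. \<exists>m::int. g = x \<otimes>\<^bsub>T\<^esub> c [^]\<^bsub>T\<^esub> m} T"
  (is "subgroup ?S T")
proof (rule T.subgroupI)
  show "?S \<subseteq> carrier T" by blast
  have "\<one>\<^bsub>T\<^esub> = \<one>\<^bsub>T\<^esub> \<otimes>\<^bsub>T\<^esub> c [^]\<^bsub>T\<^esub> (0::int)" by simp
  then show "?S \<noteq> {}" using generate.one[of T "{ar,br}"] by blast
next
  fix g assume "g \<in> ?S"
  then obtain x m where xm: "x \<in> Gr" "g = x \<otimes>\<^bsub>T\<^esub> c [^]\<^bsub>T\<^esub> (m::int)" by blast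
  have x: "x \<in> carrier T" using xm Gr_sub by blast
  have "inv\<^bsub>T\<^esub> g = inv\<^bsub>T\<^esub> (c [^]\<^bsub>T\<^esub> m) \<otimes>\<^bsub>T\<^esub> inv\<^bsub>T\<^esub> x"
    using xm x by (simp add: T.inv_mult_group)
  also have "\<dots> = c [^]\<^bsub>T\<^esub> (- m) \<otimes>\<^bsub>T\<^esub> inv\<^bsub>T\<^esub> x" by (simp add: T.int_pow_neg)
  also have "\<dots> = inv\<^bsub>T\<^esub> x \<otimes>\<^bsub>T\<^esub> c [^]\<^bsub>T\<^esub> (- m)" using x c_pow_central by simp
  finally have "inv\<^bsub>T\<^esub> g = inv\<^bsub>T\<^esub> x \<otimes>\<^bsub>T\<^esub> c [^]\<^bsub>T\<^esub> (- m)" .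
  moreover have "inv\<^bsub>T\<^esub> x \<in> Gr" using xm(1) T.subgroupE(3)[OF Gr_subgroup] by blast
  moreover have "inv\<^bsub>T\<^esub> g \<in> carrier T" using \<open>g \<in> ?S\<close> by auto
  ultimately show "inv\<^bsub>T\<^esub> g \<in> ?S" by blast
next
  fix g h assume "g \<in> ?S" "h \<in> ?S"
  then obtain x m y n where xm: "x \<in> Gr" "g = x \<otimes>\<^bsub>T\<^esub> c [^]\<^bsub>T\<^esub> (m::int)"
    and yn: "y \<in> Gr" "h = y \<otimes>\<^bsub>T\<^esub> c [^]\<^bsub>T\<^esub> (n::int)" by blast
  have x: "x \<in> carrier T" and y: "y \<in> carrier T" using xm yn Gr_sub by blast+
  have "g \<otimes>\<^bsub>T\<^esub> h = x \<otimes>\<^bsub>T\<^esub> (c [^]\<^bsub>T\<^esub> m \<otimes>\<^bsub>T\<^esub> y) \<otimes>\<^bsub>T\<^esub> c [^]\<^bsub>T\<^esub> n"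
    using xm yn x y by (simp add: T.m_assoc)
  also have "\<dots> = x \<otimes>\<^bsub>T\<^esub> (y \<otimes>\<^bsub>T\<^esub> c [^]\<^bsub>T\<^esub> m) \<otimes>\<^bsub>T\<^esub> c [^]\<^bsub>T\<^esub> n"
    using y c_pow_central by simp
  also have "\<dots> = (x \<otimes>\<^bsub>T\<^esub> y) \<otimes>\<^bsub>T\<^esub> c [^]\<^bsub>T\<^esub> (m + n)"
    using x y by (simp add: T.m_assoc T.int_pow_mult)
  finally have "g \<otimes>\<^bsub>T\<^esub> h = (x \<otimes>\<^bsub>T\<^esub> y) \<otimes>\<^bsub>T\<^esub> c [^]\<^bsub>T\<^esub> (m + n)" .
  moreover have "x \<otimes>\<^bsub>T\<^esub> y \<in> Gr" using xm yn T.subgroupE(4)[OF Gr_subgroup] by blast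
  moreover have "g \<otimes>\<^bsub>T\<^esub> h \<in> carrier T" using \<open>g \<in> ?S\<close> \<open>h \<in> ?S\<close> by auto
  ultimately show "g \<otimes>\<^bsub>T\<^esub> h \<in> ?S" by blast
qed

text \<open>Every \<open>g \<in> T\<close> is \<open>x c^m\<close> with \<open>x \<in> G\<^sub>r\<close>: by Bezout, \<open>a = (a^r)^u c^v\<close> and
  \<open>b = (b^r)^{u'} c^{v'}\<close>.\<close>
lemma decomp: "g \<in> carrier T \<Longrightarrow> \<exists>x\<in>Gr. \<exists>m::int. g = x \<otimes>\<^bsub>T\<^esub> c [^]\<^bsub>T\<^esub> m"
proof -
  let ?S = "{g \<in> carrier T. \<exists>x\<in>Gr. \<exists>m::int. g = x \<otimes>\<^bsub>T\<^esub> c [^]\<^bsub>T\<^esub> m}"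
  obtain u v where uv: "int r * u + int p * v = 1" using coprime_bezout_int[OF coprime_rp] by blast
  obtain u' v' where uv': "int r * u' + int q * v' = 1" using coprime_bezout_int[OF coprime_rq] by blast
  have "a = a [^]\<^bsub>T\<^esub> (int r * u + int p * v)" using uv by simp
  also have "\<dots> = ar [^]\<^bsub>T\<^esub> u \<otimes>\<^bsub>T\<^esub> c [^]\<^bsub>T\<^esub> v"
    by (simp add: T.int_pow_mult T.int_pow_pow[symmetric] int_pow_int c_def)
  finally have a_S: "a \<in> ?S" using Gr_pow[OF ar_Gr, of u] a_in by blast
  have "b = b [^]\<^bsub>T\<^esub> (int r * u' + int q * v')" using uv' by simp
  also have "\<dots> = br [^]\<^bsub>T\<^esub> u' \<otimes>\<^bsub>T\<^esub> c [^]\<^bsub>T\<^esub> v'"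
    by (simp add: T.int_pow_mult T.int_pow_pow[symmetric] int_pow_int c_b)
  finally have b_S: "b \<in> ?S" using Gr_pow[OF br_Gr, of u'] b_in by blast
  have "?S = carrier T" by (rule subgroup_ab[OF Gr_times_c_subgroup a_S b_S])
  then show "g \<in> carrier T \<Longrightarrow> \<exists>x\<in>Gr. \<exists>m::int. g = x \<otimes>\<^bsub>T\<^esub> c [^]\<^bsub>T\<^esub> m" by blast
qed

text \<open>Statement (iv), first part: conjugation by \<open>x c^m\<close> equals conjugation by \<open>x \<in> G\<^sub>r\<close>.\<close>
lemma Gr_normal: "Gr \<lhd> T"
  unfolding T.normal_inv_iff
proof (intro conjI Gr_subgroup ballI)
  fix g h assume g: "g \<in> carrier T" and h: "h \<in> Gr"
  obtain x m where xm: "x \<in> Gr" "g = x \<otimes>\<^bsub>T\<^esub> c [^]\<^bsub>T\<^esub> (m::int)" using decomp[OF g] by blast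
  have x: "x \<in> carrier T" and hc: "h \<in> carrier T" using xm h Gr_sub by blast+
  have "g \<otimes>\<^bsub>T\<^esub> h \<otimes>\<^bsub>T\<^esub> inv\<^bsub>T\<^esub> g = x \<otimes>\<^bsub>T\<^esub> h \<otimes>\<^bsub>T\<^esub> inv\<^bsub>T\<^esub> x"
    unfolding xm(2) by (rule T.central_conj[OF x _ hc]) (use c_pow_central in auto)
  also have "\<dots> \<in> Gr"
    using xm(1) h Gr_subgroup by (simp add: subgroup.m_closed subgroup.m_inv_closed)
  finally show "g \<otimes>\<^bsub>T\<^esub> h \<otimes>\<^bsub>T\<^esub> inv\<^bsub>T\<^esub> g \<in> Gr" .
qed

lemma Gr_onto_central_quotient: "(\<lambda>g. center T #>\<^bsub>T\<^esub> g) ` Gr = carrier (T Mod center T)"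
proof
  show "(\<lambda>g. center T #>\<^bsub>T\<^esub> g) ` Gr \<subseteq> carrier (T Mod center T)"
    using Gr_sub by (auto simp: carrier_FactGroup)
next
  show "carrier (T Mod center T) \<subseteq> (\<lambda>g. center T #>\<^bsub>T\<^esub> g) ` Gr"
  proof
    fix Y assume "Y \<in> carrier (T Mod center T)"
    then obtain g where g: "g \<in> carrier T" "Y = center T #>\<^bsub>T\<^esub> g" by (auto simp: carrier_FactGroup)
    obtain y m where ym: "y \<in> Gr" "g = y \<otimes>\<^bsub>T\<^esub> c [^]\<^bsub>T\<^esub> (m::int)" using decomp[OF g(1)] by blast
    have yc: "y \<in> carrier T" using ym Gr_sub by blast
    have cz: "c [^]\<^bsub>T\<^esub> m \<in> center T" using center_T by auto
    have "center T #>\<^bsub>T\<^esub> g = (center T #>\<^bsub>T\<^esub> c [^]\<^bsub>T\<^esub> m) #>\<^bsub>T\<^esub> y"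
      using ym yc c_pow_central center_T_subgroup by (simp add: T.coset_mult_assoc subgroup.subset)
    also have "\<dots> = center T #>\<^bsub>T\<^esub> y"
      using subgroup.rcos_const[OF center_T_subgroup T.is_group cz] by simp
    finally show "Y \<in> (\<lambda>g. center T #>\<^bsub>T\<^esub> g) ` Gr" using g ym by blast
  qed
qed

lemma generate_c_pow_r: "generate T {c [^]\<^bsub>T\<^esub> r} = range (\<lambda>k::int. c [^]\<^bsub>T\<^esub> (int r * k))"
proof -
  have "generate T {c [^]\<^bsub>T\<^esub> r} = {(c [^]\<^bsub>T\<^esub> r) [^]\<^bsub>T\<^esub> (k::int) | k. k \<in> UNIV}"
    by (rule T.generate_pow) simp
  also have "\<dots> = range (\<lambda>k::int. c [^]\<^bsub>T\<^esub> (int r * k))"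
    by (auto simp: T.int_pow_pow int_pow_int[symmetric])
  finally show ?thesis .
qed

lemma c_pow_r_central: "generate T {c [^]\<^bsub>T\<^esub> r} \<subseteq> center T"
  using generate_c_pow_r center_T by auto

text \<open>Statement (i): \<open>\<phi>\<^sub>r\<close> maps \<open>Z(T) = \<langle>c\<rangle>\<close> onto \<open>Z(G\<^sub>r)\<close>, and \<open>\<phi>\<^sub>r(c) = c^r\<close>.\<close>
lemma center_Gr: "center Grs = generate T {c [^]\<^bsub>T\<^esub> r}"
proof
  show "generate T {c [^]\<^bsub>T\<^esub> r} \<subseteq> center Grs"
    using generate_c_pow_r c_pow_r_Gr c_pow_central Gr_sub by (auto simp: center_def)
next
  show "center Grs \<subseteq> generate T {c [^]\<^bsub>T\<^esub> r}"
  proof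
    fix z assume z: "z \<in> center Grs"
    then have zG: "z \<in> Gr" and zc: "\<And>g. g \<in> Gr \<Longrightarrow> z \<otimes>\<^bsub>T\<^esub> g = g \<otimes>\<^bsub>T\<^esub> z"
      by (auto simp: center_def)
    obtain z0 where z0: "z0 \<in> carrier T" "z = phi z0" using zG phi_image by auto
    have "z0 \<in> center T" unfolding center_def
    proof (intro CollectI conjI ballI z0(1))
      fix g assume g: "g \<in> carrier T"
      have "phi (z0 \<otimes>\<^bsub>T\<^esub> g) = phi (g \<otimes>\<^bsub>T\<^esub> z0)"
        using z0 g zc[of "phi g"] phi_image group_hom.hom_mult[OF pow_endo_group_hom] by auto
      then show "z0 \<otimes>\<^bsub>T\<^esub> g = g \<otimes>\<^bsub>T\<^esub> z0"
        using phi_inj z0 g by (meson T.m_closed inj_onD)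
    qed
    then obtain m where "z0 = c [^]\<^bsub>T\<^esub> (m::int)" using center_T by auto
    then have "z = c [^]\<^bsub>T\<^esub> (int r * m)"
      using z0 by (simp add: group_hom.hom_int_pow[OF pow_endo_group_hom] pow_endo_c
                             T.int_pow_pow int_pow_int[symmetric])
    then show "z \<in> generate T {c [^]\<^bsub>T\<^esub> r}" using generate_c_pow_r by auto
  qed
qed

text \<open>Statement (ii): commutators of \<open>T\<close> are commutators of \<open>G\<^sub>r\<close>, since central factors
  can be dropped from \<open>x c^m\<close>.\<close>
lemma derived_Gr: "derived Grs Gr = D"
proof -
  have "derived_set Grs Gr = derived_set T Gr"
    using T.m_inv_consistent[OF Gr_subgroup] by auto
  moreover have "derived_set T Gr = derived_set T (carrier T)"
  proof
    show "derived_set T Gr \<subseteq> derived_set T (carrier T)" using Gr_sub by blast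
  next
    show "derived_set T (carrier T) \<subseteq> derived_set T Gr"
    proof
      fix w assume "w \<in> derived_set T (carrier T)"
      then obtain h1 h2 where h: "h1 \<in> carrier T" "h2 \<in> carrier T"
        "w = h1 \<otimes>\<^bsub>T\<^esub> h2 \<otimes>\<^bsub>T\<^esub> inv\<^bsub>T\<^esub> h1 \<otimes>\<^bsub>T\<^esub> inv\<^bsub>T\<^esub> h2" by blast
      obtain x m where xm: "x \<in> Gr" "h1 = x \<otimes>\<^bsub>T\<^esub> c [^]\<^bsub>T\<^esub> (m::int)" using decomp[OF h(1)] by blast
      obtain y n where yn: "y \<in> Gr" "h2 = y \<otimes>\<^bsub>T\<^esub> c [^]\<^bsub>T\<^esub> (n::int)" using decomp[OF h(2)] by blast
      have x: "x \<in> carrier T" and y: "y \<in> carrier T" using xm yn Gr_sub by blast+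
      have "w = x \<otimes>\<^bsub>T\<^esub> y \<otimes>\<^bsub>T\<^esub> inv\<^bsub>T\<^esub> x \<otimes>\<^bsub>T\<^esub> inv\<^bsub>T\<^esub> y"
        unfolding h(3) xm(2) yn(2)
        by (rule T.central_commutator[OF x y]) (use c_pow_central in auto)
      then show "w \<in> derived_set T Gr" using xm(1) yn(1) by blast
    qed
  qed
  moreover have "generate Grs (derived_set T Gr) = generate T (derived_set T Gr)"
    by (rule T.generate_consistent[OF T.derived_set_incl[OF subset_refl Gr_subgroup] Gr_subgroup])
  ultimately show ?thesis by (simp add: derived_def)
qed

lemma D_normal: "D \<lhd> T" by (rule T.derived_is_normal[OF T.normal_self])
lemma D_subgroup: "subgroup D T" using D_normal normal_imp_subgroup by blast

lemma D_sub_Gr: "D \<subseteq> Gr"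
  using group.derived_incl[OF Grs_group, of Gr "carrier Grs"] group.subgroup_self[OF Grs_group]
        derived_Gr by simp

lemma D_normal_Gr: "D \<lhd> Grs"
  using group.derived_is_normal[OF Grs_group group.normal_self[OF Grs_group]] derived_Gr by simp

lemma rcos_Grs: "H #>\<^bsub>Grs\<^esub> x = H #>\<^bsub>T\<^esub> x"
  by (simp add: r_coset_def)

lemma Gr_image_Mod_D: "(\<lambda>g. D #>\<^bsub>T\<^esub> g) ` Gr = carrier (Grs Mod D)"
  by (auto simp: FactGroup_def RCOSETS_def rcos_Grs)

lemma lam_Gr: "g \<in> Gr \<Longrightarrow> \<exists>g0 \<in> carrier T. lam g = int r * lam g0"
proof -
  assume "g \<in> Gr"
  then obtain g0 where "g0 \<in> carrier T" "g = phi g0" using phi_image by (metis imageE)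
  then show ?thesis using lam_pow_endo by blast
qed

lemma xr_Gr: "ar [^]\<^bsub>T\<^esub> (q1::int) \<otimes>\<^bsub>T\<^esub> br [^]\<^bsub>T\<^esub> (p1::int) \<in> Gr"
  by (rule subgroup.m_closed[OF Gr_subgroup Gr_pow[OF ar_Gr] Gr_pow[OF br_Gr]])

lemma lam_xr:
  assumes "int p * p1 + int q * q1 = 1"
  shows "lam (ar [^]\<^bsub>T\<^esub> q1 \<otimes>\<^bsub>T\<^esub> br [^]\<^bsub>T\<^esub> p1) = int r"
proof -
  have "lam (ar [^]\<^bsub>T\<^esub> q1 \<otimes>\<^bsub>T\<^esub> br [^]\<^bsub>T\<^esub> p1) = int r * (int p * p1 + int q * q1)"
    by (simp add: lam_ipow lam_npow algebra_simps)
  then show ?thesis using assms by simp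
qed

text \<open>Statement (iii), first part: \<open>G\<^sub>r/G\<^sub>r'\<close> is cyclic, generated by the class of \<open>x\<^sub>r\<close>;
  for \<open>g \<in> G\<^sub>r\<close> the element \<open>g x\<^sub>r^{-\<lambda>(g)/r}\<close> has degree \<open>0\<close>, hence lies in \<open>T' = G\<^sub>r'\<close>.\<close>
lemma abelianization_Gr_cyclic:
  assumes bez: "int p * p1 + int q * q1 = 1"
  defines "xr \<equiv> ar [^]\<^bsub>T\<^esub> q1 \<otimes>\<^bsub>T\<^esub> br [^]\<^bsub>T\<^esub> p1"
  shows "generate (Grs Mod D) {D #>\<^bsub>T\<^esub> xr} = carrier (Grs Mod D)"
proof -
  let ?Q = "Grs Mod D"
  interpret Dn: normal D Grs by (rule D_normal_Gr)
  have Qg: "group ?Q" by (rule Dn.factorgroup_is_group)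
  interpret pi: group_hom Grs ?Q "\<lambda>x. D #>\<^bsub>Grs\<^esub> x"
    using Dn.r_coset_hom_Mod Qg by (simp add: group_hom_def group_hom_axioms_def Grs_group)
  have xrG: "xr \<in> Gr" unfolding xr_def by (rule xr_Gr)
  have xrc: "xr \<in> carrier T" using xrG Gr_sub by blast
  have X: "D #>\<^bsub>T\<^esub> xr \<in> carrier ?Q" using xrG Gr_image_Mod_D by blast
  have "Y \<in> generate ?Q {D #>\<^bsub>T\<^esub> xr}" if "Y \<in> carrier ?Q" for Y
  proof -
    obtain g where g: "g \<in> Gr" "Y = D #>\<^bsub>T\<^esub> g" using \<open>Y \<in> carrier ?Q\<close> Gr_image_Mod_D by blast
    have gc: "g \<in> carrier T" using g Gr_sub by blast
    obtain g0 where g0: "g0 \<in> carrier T" "lam g = int r * lam g0" using lam_Gr[OF g(1)] by blast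
    let ?n = "lam g0"
    have pw: "xr [^]\<^bsub>T\<^esub> ?n \<in> carrier T" using xrc by simp
    have "lam (g \<otimes>\<^bsub>T\<^esub> inv\<^bsub>T\<^esub> (xr [^]\<^bsub>T\<^esub> ?n)) = 0"
      using gc xrc g0 lam_xr[OF bez] by (simp add: lam_ipow xr_def)
    then have hD: "g \<otimes>\<^bsub>T\<^esub> inv\<^bsub>T\<^esub> (xr [^]\<^bsub>T\<^esub> ?n) \<in> D" using lam_kernel_in_derived gc pw by simp
    have "D #>\<^bsub>T\<^esub> g = (D #>\<^bsub>T\<^esub> (g \<otimes>\<^bsub>T\<^esub> inv\<^bsub>T\<^esub> (xr [^]\<^bsub>T\<^esub> ?n))) #>\<^bsub>T\<^esub> (xr [^]\<^bsub>T\<^esub> ?n)"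
      using gc pw D_subgroup by (simp add: T.coset_mult_assoc subgroup.subset T.m_assoc)
    also have "\<dots> = D #>\<^bsub>T\<^esub> (xr [^]\<^bsub>Grs\<^esub> ?n)"
      using subgroup.rcos_const[OF D_subgroup T.is_group hD] T.int_pow_consistent[OF Gr_subgroup xrG]
      by simp
    also have "\<dots> = (D #>\<^bsub>T\<^esub> xr) [^]\<^bsub>?Q\<^esub> ?n"
      using pi.hom_int_pow[of xr ?n] xrG by (simp add: rcos_Grs)
    finally show ?thesis using g group.generate_pow[OF Qg X] by auto
  qed
  then show ?thesis using group.generate_incl[OF Qg] X by blast
qed

lemma normal_closure_xr:
  assumes bez: "int p * p1 + int q * q1 = 1"
  defines "xr \<equiv> ar [^]\<^bsub>T\<^esub> q1 \<otimes>\<^bsub>T\<^esub> br [^]\<^bsub>T\<^esub> p1"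
  shows "normal_closure T {xr} = Gr \<and> normal_closure Grs {xr} = Gr"
proof -
  interpret Grs: group Grs by (rule Grs_group)
  have xrG: "xr \<in> Gr" unfolding xr_def by (rule xr_Gr)
  have rel: "ar [^]\<^bsub>T\<^esub> p = br [^]\<^bsub>T\<^esub> q" by (simp add: pow_rel)
  have "Gr \<subseteq> normal_closure T {xr}"
    unfolding xr_def using T.pq_generate_in_normal_closure[OF _ _ rel bez] by simp
  moreover have "normal_closure T {xr} \<subseteq> Gr"
    using T.normal_closure_least[OF Gr_normal] xrG by simp
  moreover have "generate Grs {ar, br} \<subseteq> normal_closure Grs {xr}"
  proof -
    have rel': "ar [^]\<^bsub>Grs\<^esub> p = br [^]\<^bsub>Grs\<^esub> q" using rel T.nat_pow_consistent by simp
    have "xr = ar [^]\<^bsub>Grs\<^esub> q1 \<otimes>\<^bsub>Grs\<^esub> br [^]\<^bsub>Grs\<^esub> p1"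
      using T.int_pow_consistent[OF Gr_subgroup ar_Gr, of q1]
            T.int_pow_consistent[OF Gr_subgroup br_Gr, of p1] by (simp add: xr_def)
    then show ?thesis
      using Grs.pq_generate_in_normal_closure[OF _ _ rel' bez] ar_Gr br_Gr by simp
  qed
  moreover have "generate Grs {ar, br} = Gr"
    using T.generate_consistent[OF _ Gr_subgroup, of "{ar,br}"] ar_Gr br_Gr by simp
  moreover have "normal_closure Grs {xr} \<subseteq> Gr"
    using Grs.normal_closure_least[OF Grs.normal_self] xrG by simp
  ultimately show ?thesis by blast
qed

abbreviation "Zr \<equiv> integer_mod_group r"
abbreviation "Zc \<equiv> T\<lparr>carrier := center T\<rparr>"

lemma carrier_Zr: "carrier Zr = {0..<int r}"
  using r1 by (simp add: carrier_integer_mod_group)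

lemma Zr_hom_mod:
  assumes h: "\<And>x y. x \<in> carrier K \<Longrightarrow> y \<in> carrier K \<Longrightarrow> f (x \<otimes>\<^bsub>K\<^esub> y) = f x + f y"
  shows "(\<lambda>x. f x mod int r) \<in> hom K Zr"
  using r1 h by (intro homI) (auto simp: carrier_Zr mod_add_eq)

text \<open>The degree modulo \<open>r\<close>: a surjection \<open>T \<rightarrow> \<int>/r\<close> whose kernel is \<open>G\<^sub>r\<close>, because
  \<open>\<lambda>(x c^m) = \<lambda>(x) + mpq\<close> and \<open>r\<close> is prime to \<open>pq\<close>.\<close>
lemma kernel_deg_mod_r: "kernel T Zr (\<lambda>g. lam g mod int r) = Gr"
proof
  show "Gr \<subseteq> kernel T Zr (\<lambda>g. lam g mod int r)"
    using lam_Gr Gr_sub by (fastforce simp: kernel_def)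
next
  show "kernel T Zr (\<lambda>g. lam g mod int r) \<subseteq> Gr"
  proof
    fix g assume "g \<in> kernel T Zr (\<lambda>g. lam g mod int r)"
    then have g: "g \<in> carrier T" and d: "int r dvd lam g" by (auto simp: kernel_def)
    obtain y m where ym: "y \<in> Gr" "g = y \<otimes>\<^bsub>T\<^esub> c [^]\<^bsub>T\<^esub> (m::int)" using decomp[OF g] by blast
    have yc: "y \<in> carrier T" using ym Gr_sub by blast
    obtain y0 where y0: "lam y = int r * lam y0" using lam_Gr[OF ym(1)] by blast
    have "lam g = int r * lam y0 + m * (int p * int q)" using ym yc y0 by (simp add: lam_ipow)
    then have "int r dvd m * (int p * int q)" using d by (metis dvd_add_right_iff dvd_triv_left)
    moreover have "coprime (int r) (int p * int q)" using coprime_rp coprime_rq by simp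
    ultimately have "int r dvd m" using coprime_dvd_mult_left_iff by blast
    then have "c [^]\<^bsub>T\<^esub> m \<in> Gr" using c_pow_r_Gr by (auto elim: dvdE)
    then show "g \<in> Gr" unfolding ym(2) by (rule subgroup.m_closed[OF Gr_subgroup ym(1)])
  qed
qed

lemma iso_quotient_Zr: "T Mod Gr \<cong> Zr"
proof -
  have hom: "(\<lambda>g. lam g mod int r) \<in> hom T Zr" by (rule Zr_hom_mod) auto
  interpret h: group_hom T Zr "\<lambda>g. lam g mod int r"
    using hom by (simp add: group_hom_def group_hom_axioms_def group_integer_mod_group)
  obtain p1 q1 where bez: "int p * p1 + int q * q1 = 1"
    using coprime_bezout_int[OF coprime_pq] by blast
  define x0 where "x0 = a [^]\<^bsub>T\<^esub> q1 \<otimes>\<^bsub>T\<^esub> b [^]\<^bsub>T\<^esub> p1"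
  have x0: "x0 \<in> carrier T" "lam x0 = 1" using bez by (simp_all add: x0_def lam_ipow algebra_simps)
  have "j \<in> (\<lambda>g. lam g mod int r) ` carrier T" if "j \<in> carrier Zr" for j
  proof -
    have "lam (x0 [^]\<^bsub>T\<^esub> j) mod int r = j" using that x0 by (simp add: lam_ipow carrier_Zr)
    then show ?thesis using x0 by (metis T.int_pow_closed image_eqI)
  qed
  then have "(\<lambda>g. lam g mod int r) ` carrier T = carrier Zr" using h.hom_closed by blast
  then show ?thesis using h.FactGroup_iso kernel_deg_mod_r by simp
qed

text \<open>\<open>G\<^sub>r/T'\<close> is a subgroup of the abelian group \<open>T/T'\<close>, and the composite projection
  \<open>T \<rightarrow> (T/T')/(G\<^sub>r/T')\<close> has kernel \<open>G\<^sub>r\<close> (as \<open>T' \<subseteq> G\<^sub>r\<close>).\<close>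
lemma iso_quotient_abelianizations: "T Mod Gr \<cong> (T Mod D) Mod carrier (Grs Mod D)"
proof -
  let ?Q0 = "T Mod D" and ?K = "carrier (Grs Mod D)"
  interpret Dn: normal D T by (rule D_normal)
  interpret Q: comm_group ?Q0 by (rule T.derived_quot_is_comm_group)
  interpret pi: group_hom T ?Q0 "\<lambda>x. D #>\<^bsub>T\<^esub> x"
    using Dn.r_coset_hom_Mod by (simp add: group_hom_def group_hom_axioms_def Q.is_group)
  have Ksub: "subgroup ?K ?Q0"
    using pi.subgroup_img_is_subgroup[OF Gr_subgroup] Gr_image_Mod_D by simp
  interpret Kn: normal ?K ?Q0 using Q.subgroup_imp_normal[OF Ksub] .
  define h where "h = (\<lambda>Y. r_coset ?Q0 ?K Y) \<circ> (\<lambda>x. D #>\<^bsub>T\<^esub> x)"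
  have "h \<in> hom T (?Q0 Mod ?K)"
    unfolding h_def using Dn.r_coset_hom_Mod Kn.r_coset_hom_Mod by (rule hom_compose)
  then interpret h: group_hom T "?Q0 Mod ?K" h
    using Kn.factorgroup_is_group by (simp add: group_hom_def group_hom_axioms_def)
  have img: "h ` carrier T = carrier (?Q0 Mod ?K)"
    unfolding h_def carrier_FactGroup[of ?Q0 ?K] carrier_FactGroup[of T D] by (simp add: image_comp)
  have "kernel T (?Q0 Mod ?K) h = Gr"
  proof
    show "kernel T (?Q0 Mod ?K) h \<subseteq> Gr"
    proof
      fix g assume "g \<in> kernel T (?Q0 Mod ?K) h"
      then have g: "g \<in> carrier T" and e: "r_coset ?Q0 ?K (D #>\<^bsub>T\<^esub> g) = ?K"
        by (auto simp: kernel_def h_def)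
      then have "D #>\<^bsub>T\<^esub> g \<in> ?K" using Q.rcos_eq_self_imp_mem[OF Ksub] by simp
      then obtain y where y: "y \<in> Gr" "D #>\<^bsub>T\<^esub> g = D #>\<^bsub>T\<^esub> y" using Gr_image_Mod_D by blast
      have "g \<in> D #>\<^bsub>T\<^esub> y" using T.rcos_self[OF g D_subgroup] y by simp
      then obtain d where d: "d \<in> D" "g = d \<otimes>\<^bsub>T\<^esub> y" unfolding r_coset_def by blast
      then show "g \<in> Gr" using D_sub_Gr subgroup.m_closed[OF Gr_subgroup _ y(1)] by blast
    qed
  next
    show "Gr \<subseteq> kernel T (?Q0 Mod ?K) h"
    proof
      fix g assume g: "g \<in> Gr"
      then have "D #>\<^bsub>T\<^esub> g \<in> ?K" using Gr_image_Mod_D by blast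
      then have "r_coset ?Q0 ?K (D #>\<^bsub>T\<^esub> g) = ?K"
        using subgroup.rcos_const[OF Ksub Q.is_group] by blast
      then show "g \<in> kernel T (?Q0 Mod ?K) h" using g Gr_sub by (auto simp: kernel_def h_def)
    qed
  qed
  then show ?thesis using h.FactGroup_iso[OF img] by simp
qed

text \<open>\<open>Z(T)/Z(G\<^sub>r) = \<langle>c\<rangle>/\<langle>c^r\<rangle>\<close> is a group identified with \<open>\<int>/r\<close> by \<open>c^m \<mapsto> m mod r\<close>.\<close>
lemma center_quotient_cyclic: "group (Zc Mod center Grs) \<and> Zc Mod center Grs \<cong> Zr"
proof -
  have pq0: "int p * int q \<noteq> 0" using p2 q2 by simp
  define e where "e z = lam z div (int p * int q)" for z
  have e_c: "e (c [^]\<^bsub>T\<^esub> m) = m" for m :: int using pq0 by (simp add: e_def lam_ipow)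
  have cm: "z \<in> center T \<Longrightarrow> \<exists>m::int. z = c [^]\<^bsub>T\<^esub> m" for z using center_T by auto
  have "(\<lambda>z. e z mod int r) \<in> hom Zc Zr"
  proof (rule Zr_hom_mod)
    fix x y assume xy: "x \<in> carrier Zc" "y \<in> carrier Zc"
    obtain m :: int where m: "x = c [^]\<^bsub>T\<^esub> m" using cm xy by auto
    obtain n :: int where n: "y = c [^]\<^bsub>T\<^esub> n" using cm xy by auto
    show "e (x \<otimes>\<^bsub>Zc\<^esub> y) = e x + e y" by (simp add: m n T.int_pow_mult[symmetric] e_c)
  qed
  then interpret h: group_hom Zc Zr "\<lambda>z. e z mod int r"
    using T.subgroup_imp_group[OF center_T_subgroup]
    by (simp add: group_hom_def group_hom_axioms_def group_integer_mod_group)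
  have "j \<in> (\<lambda>z. e z mod int r) ` carrier Zc" if "j \<in> carrier Zr" for j
  proof -
    have "e (c [^]\<^bsub>T\<^esub> j) mod int r = j" using that by (simp add: e_c carrier_Zr)
    moreover have "c [^]\<^bsub>T\<^esub> j \<in> carrier Zc" using center_T by auto
    ultimately show ?thesis by (metis image_eqI)
  qed
  then have img: "(\<lambda>z. e z mod int r) ` carrier Zc = carrier Zr" using h.hom_closed by blast
  have "kernel Zc Zr (\<lambda>z. e z mod int r) = center Grs"
    unfolding center_Gr generate_c_pow_r kernel_def using center_T
    by (auto simp: e_c dvd_eq_mod_eq_0[symmetric] elim!: dvdE)
  then show ?thesis
    using h.FactGroup_iso[OF img] normal.factorgroup_is_group[OF h.normal_kernel] by simp
qed

lemma iso_abelianization_center: "(T Mod D) Mod carrier (Grs Mod D) \<cong> Zc Mod center Grs"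
proof -
  have "group (T Mod Gr)" using Gr_normal by (rule normal.factorgroup_is_group)
  then have "(T Mod D) Mod carrier (Grs Mod D) \<cong> T Mod Gr"
    using iso_quotient_abelianizations by (rule group.iso_sym)
  also have "\<dots> \<cong> Zr" by (rule iso_quotient_Zr)
  also have "Zr \<cong> Zc Mod center Grs" using center_quotient_cyclic group.iso_sym by blast
  finally show ?thesis .
qed

end

theorem mainTheorem18:
  fixes p q r :: nat
  assumes "p \<ge> 2" and "q \<ge> 2" and "coprime p q"
      and "r \<ge> 1" and "coprime r p" and "coprime r q"
  defines "G \<equiv> Gt p q"
      and "\<alpha> \<equiv> galpha p q" and "\<beta> \<equiv> gbeta p q"
      and "c \<equiv> galpha p q [^]\<^bsub>Gt p q\<^esub> p"
      and "\<alpha>r \<equiv> galpha p q [^]\<^bsub>Gt p q\<^esub> r"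
      and "\<beta>r \<equiv> gbeta p q [^]\<^bsub>Gt p q\<^esub> r"
      and "Gr \<equiv> generate (Gt p q) {galpha p q [^]\<^bsub>Gt p q\<^esub> r, gbeta p q [^]\<^bsub>Gt p q\<^esub> r}"
  shows
    "(\<exists>\<phi>. \<phi> \<in> iso G (G\<lparr>carrier := Gr\<rparr>) \<and> \<phi> \<alpha> = \<alpha>r \<and> \<phi> \<beta> = \<beta>r)
     \<and> center (G\<lparr>carrier := Gr\<rparr>) = generate G {c [^]\<^bsub>G\<^esub> r}
     \<and> generate G {c [^]\<^bsub>G\<^esub> r} \<subseteq> center G
     \<and> derived (G\<lparr>carrier := Gr\<rparr>) Gr = derived G (carrier G)
     \<and> (\<forall>p1 q1 :: int. int p * p1 + int q * q1 = 1 \<longrightarrow>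
          (let xr = \<alpha>r [^]\<^bsub>G\<^esub> q1 \<otimes>\<^bsub>G\<^esub> \<beta>r [^]\<^bsub>G\<^esub> p1 in
             generate (G\<lparr>carrier := Gr\<rparr> Mod derived (G\<lparr>carrier := Gr\<rparr>) Gr)
                 {derived (G\<lparr>carrier := Gr\<rparr>) Gr #>\<^bsub>G\<^esub> xr}
               = carrier (G\<lparr>carrier := Gr\<rparr> Mod derived (G\<lparr>carrier := Gr\<rparr>) Gr)
             \<and> normal_closure G {xr} = Gr
             \<and> normal_closure (G\<lparr>carrier := Gr\<rparr>) {xr} = Gr))
     \<and> Gr \<lhd> G
     \<and> (G Mod Gr) \<cong> ((G Mod derived G (carrier G))
                        Mod carrier (G\<lparr>carrier := Gr\<rparr> Mod derived (G\<lparr>carrier := Gr\<rparr>) Gr))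
     \<and> ((G Mod derived G (carrier G))
           Mod carrier (G\<lparr>carrier := Gr\<rparr> Mod derived (G\<lparr>carrier := Gr\<rparr>) Gr))
         \<cong> (G\<lparr>carrier := center G\<rparr> Mod center (G\<lparr>carrier := Gr\<rparr>))
     \<and> (G\<lparr>carrier := center G\<rparr> Mod center (G\<lparr>carrier := Gr\<rparr>)) \<cong> integer_mod_group r
     \<and> (\<lambda>g. center G #>\<^bsub>G\<^esub> g) ` Gr = carrier (G Mod center G)"
proof -
  interpret X: pq_subgroup p q r
    using assms(1-6) by unfold_locales
  have c: "c = pq_group.c p q" unfolding c_def X.c_def ..
  show ?thesis
    unfolding G_def \<alpha>_def \<beta>_def \<alpha>r_def \<beta>r_def Gr_def c Let_def X.derived_Gr
    using X.phi_iso X.pow_endo_a X.pow_endo_b X.center_Gr X.c_pow_r_central X.Gr_normal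
      X.abelianization_Gr_cyclic X.normal_closure_xr
      X.iso_quotient_abelianizations X.iso_abelianization_center X.center_quotient_cyclic
      X.Gr_onto_central_quotient
    by blast
qed

end
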